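(* Let $n\ge3$, $A$ a commutative ring, $\alpha_k$ a simple root ($k\in\{2,2',3,\dots,n\}$), and $\omega\in PBr(D_n)$, viewed in $Br(D_n,A)$ via $y_\alpha\mapsto y_\alpha^0$. Then there exists $\omega'\in Br(D_n)$, independent of $a$, such that $y_k^a\,\omega=\omega'\,y_k^a$ in $Br(D_n,A)$ for all $a\in A$. Consequently, for every $k$ and every $a\in A$, the element $y_k^a(y_k^0)^{-1}\in Br(D_n,A)$ commutes with every element of $PBr(D_n)$.
   Context: Simple roots of $D_n$: $\alpha_i=-\epsilon_{i-1}+\epsilon_i$ ($2\le i\le n$), $\alpha_{2'}=\epsilon_1+\epsilon_2$; adjacent pairs are $\{2,3\},\{2',3\},\{k,k+1\}$ ($3\le k\le n-1$), ordered by $2<3<\dots<n$ and $2'<3$. Write $y_k^a=y_{\alpha_k}^a$. $Br(D_n,A)$ is generated by $y_k^a$ with relations for $a,b,c\in A$: $y_k^a y_k^0 y_k^b=y_k^0y_k^0y_k^{a+b}$; $y_k^ay_l^b=y_l^by_k^a$ for non-adjacent $k\ne l$; $y_k^ay_l^by_k^c=y_l^cy_k^{b+ac}y_l^a$ for adjacent $k<l$. $Br(D_n)=Br(D_n,0)$ (generators $y_k$, with commutation for non-adjacent and braid relations $y_ky_ly_k=y_ly_ky_l$ for adjacent pairs) is identified with the subgroup generated by the $y_k^0$; $PBr(D_n)$ is the kernel of $Br(D_n)\to W(D_n)$, $y_k\mapsto$ reflection $\sigma_{\alpha_k}$. *)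

theory Defs
  imports Main
begin

text \<open>A word in generators of type 'g: (True, x) is the generator x, (False, x) its inverse.\<close>
type_synonym 'g word = "(bool \<times> 'g) list"

definition winv :: "'g word \<Rightarrow> 'g word" where
  "winv w = rev (map (\<lambda>(b, x). (\<not> b, x)) w)"

inductive pres_eq :: "('g word \<times> 'g word) set \<Rightarrow> 'g word \<Rightarrow> 'g word \<Rightarrow> bool"
  for R where
  refl: "pres_eq R u u"
| sym: "pres_eq R u v \<Longrightarrow> pres_eq R v u"
| trans: "pres_eq R u v \<Longrightarrow> pres_eq R v w \<Longrightarrow> pres_eq R u w"
| cancel: "pres_eq R (u @ [(b, x), (\<not> b, x)] @ v) (u @ v)"
| rel: "(l, r) \<in> R \<Longrightarrow> pres_eq R (u @ l @ v) (u @ r @ v)"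

text \<open>Node N i stands for alpha_i (2 <= i <= n); N2' stands for alpha_{2'}.\<close>
datatype node = N nat | N2'

definition valid :: "nat \<Rightarrow> node \<Rightarrow> bool" where
  "valid n k \<longleftrightarrow> k = N2' \<or> (\<exists>i. k = N i \<and> 2 \<le> i \<and> i \<le> n)"

definition adj_lt :: "nat \<Rightarrow> node \<Rightarrow> node \<Rightarrow> bool" where
  "adj_lt n k l \<longleftrightarrow> (k = N 2 \<and> l = N 3) \<or> (k = N2' \<and> l = N 3)
     \<or> (\<exists>j. 3 \<le> j \<and> j \<le> n - 1 \<and> k = N j \<and> l = N (Suc j))"

definition adjacent :: "nat \<Rightarrow> node \<Rightarrow> node \<Rightarrow> bool" where
  "adjacent n k l \<longleftrightarrow> adj_lt n k l \<or> adj_lt n l k"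

definition y :: "node \<Rightarrow> 'a \<Rightarrow> (node \<times> 'a) word" where
  "y k a = [(True, (k, a))]"

definition BrA_rels :: "nat \<Rightarrow> ((node \<times> 'a::comm_ring_1) word \<times> (node \<times> 'a) word) set" where
  "BrA_rels n =
     {(y k a @ y k 0 @ y k b, y k 0 @ y k 0 @ y k (a + b)) | k a b. valid n k}
   \<union> {(y k a @ y l b, y l b @ y k a) | k l a b.
        valid n k \<and> valid n l \<and> k \<noteq> l \<and> \<not> adjacent n k l}
   \<union> {(y k a @ y l b @ y k c, y l c @ y k (b + a * c) @ y l a) | k l a b c.
        adj_lt n k l}"

definition BrA_eq :: "nat \<Rightarrow> (node \<times> 'a::comm_ring_1) word \<Rightarrow> (node \<times> 'a) word \<Rightarrow> bool" where
  "BrA_eq n = pres_eq (BrA_rels n)"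

text \<open>Elements of Br(D_n) are given by words in the generators y_k; they are viewed
  in Br(D_n, A) via y_k \<mapsto> y_k^0.\<close>
definition emb :: "node word \<Rightarrow> (node \<times> 'a::zero) word" where
  "emb w = map (\<lambda>(b, k). (b, (k, 0))) w"

definition Br_word :: "nat \<Rightarrow> node word \<Rightarrow> bool" where
  "Br_word n w \<longleftrightarrow> (\<forall>x \<in> set w. valid n (snd x))"

text \<open>Roots as integer vectors (coordinates 1..n, indexed by nat).\<close>
definition root :: "node \<Rightarrow> nat \<Rightarrow> int" where
  "root k = (case k of
      N i \<Rightarrow> (\<lambda>j. if j = i then 1 else if j = i - 1 then -1 else 0)
    | N2' \<Rightarrow> (\<lambda>j. if j = 1 \<or> j = 2 then 1 else 0))"

text \<open>Reflection sigma_alpha(v) = v - (v . alpha) alpha (all roots have norm^2 = 2).\<close>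
definition refl :: "nat \<Rightarrow> node \<Rightarrow> (nat \<Rightarrow> int) \<Rightarrow> (nat \<Rightarrow> int)" where
  "refl n k v = (\<lambda>j. v j - (\<Sum>i\<in>{1..n}. v i * root k i) * root k j)"

text \<open>Image in W(D_n) of a word (each reflection is an involution, so inverses map to
  the same reflection).\<close>
definition to_W :: "nat \<Rightarrow> node word \<Rightarrow> (nat \<Rightarrow> int) \<Rightarrow> (nat \<Rightarrow> int)" where
  "to_W n w = foldr (\<lambda>(b, k) f. refl n k \<circ> f) w id"

definition in_PBr :: "nat \<Rightarrow> node word \<Rightarrow> bool" where
  "in_PBr n w \<longleftrightarrow> Br_word n w \<and> to_W n w = id"

end

theory Submission
  imports Defs "HOL-Algebra.Group"
begin

text \<open>Write \<open>s\<^sub>k = y\<^sub>k\<^sup>0\<close> and \<open>X\<^sub>k\<^sup>a = y\<^sub>k\<^sup>a s\<^sub>k\<^sup>-\<^sup>1\<close>. The relations of \<open>Br(D\<^sub>n, A)\<close> make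
  conjugation by the \<open>s\<^sub>m\<close> act on these elements as the Weyl group acts on roots: to every root
  \<open>\<plusminus>\<epsilon>\<^sub>j \<plusminus> \<epsilon>\<^sub>i\<close> one attaches a conjugate \<open>Y\<close> of some \<open>X\<^sub>k\<^sup>a\<close>, with \<open>Y = X\<^sub>k\<^sup>a\<close> for the simple root
  \<open>\<alpha>\<^sub>k\<close>, and shows by induction on the largest index \<open>j\<close> that \<open>s\<^sub>m Y\<^sub>\<beta> s\<^sub>m\<^sup>-\<^sup>1 = Y\<^bsub>\<sigma>\<^sub>m \<beta>\<^esub>\<close>,
  checking the finitely many local configurations of \<open>m\<close>, \<open>j\<close> and \<open>i\<close> in the Dynkin diagram.
  A pure braid acts trivially on the roots, so it commutes with \<open>X\<^sub>k\<^sup>a = Y\<^bsub>\<alpha>\<^sub>k\<^esub>\<close>; then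
  \<open>y\<^sub>k\<^sup>a \<omega> = (s\<^sub>k \<omega> s\<^sub>k\<^sup>-\<^sup>1) y\<^sub>k\<^sup>a\<close>, since \<open>s\<^sub>k \<omega> s\<^sub>k\<^sup>-\<^sup>1\<close> is pure as well.

  The argument is carried out in an arbitrary group containing elements that satisfy the
  defining relations; the presented group \<open>Br(D\<^sub>n, A)\<close> is then one instance.\<close>

section \<open>Conjugation and braid identities in a group\<close>

context group
begin

lemma mult_inv_cancel_left [simp]: "x \<in> carrier G \<Longrightarrow> w \<in> carrier G \<Longrightarrow> x \<otimes> (inv x \<otimes> w) = w"
  by (simp flip: m_assoc)

lemma inv_mult_cancel_left [simp]: "x \<in> carrier G \<Longrightarrow> w \<in> carrier G \<Longrightarrow> inv x \<otimes> (x \<otimes> w) = w"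
  by (simp flip: m_assoc)

lemma mult_solve_middle:
  "\<lbrakk>a \<in> carrier G; b \<in> carrier G; x \<in> carrier G; a \<otimes> x \<otimes> b = c\<rbrakk> \<Longrightarrow> x = inv a \<otimes> c \<otimes> inv b"
  by (auto simp: m_assoc)

lemma mult_solve_left3:
  "\<lbrakk>a \<in> carrier G; b \<in> carrier G; c \<in> carrier G; a \<otimes> b \<otimes> c = d\<rbrakk> \<Longrightarrow> a = d \<otimes> inv c \<otimes> inv b"
  by (auto simp: m_assoc)

lemma square_commute: "\<lbrakk>a \<in> carrier G; b \<in> carrier G; a \<otimes> b = b \<otimes> a\<rbrakk> \<Longrightarrow> a \<otimes> a \<otimes> b = b \<otimes> (a \<otimes> a)"
  by (metis m_assoc)

definition conjugate :: "'a \<Rightarrow> 'a \<Rightarrow> 'a" where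
  "conjugate g z = g \<otimes> z \<otimes> inv g"

lemma conjugate_closed [simp]: "\<lbrakk>g \<in> carrier G; z \<in> carrier G\<rbrakk> \<Longrightarrow> conjugate g z \<in> carrier G"
  by (simp add: conjugate_def)

lemma conjugate_one [simp]: "z \<in> carrier G \<Longrightarrow> conjugate \<one> z = z"
  by (simp add: conjugate_def)

lemma conjugate_one_right [simp]: "g \<in> carrier G \<Longrightarrow> conjugate g \<one> = \<one>"
  by (simp add: conjugate_def)

lemma conjugate_conjugate:
  "\<lbrakk>g \<in> carrier G; h \<in> carrier G; z \<in> carrier G\<rbrakk> \<Longrightarrow> conjugate g (conjugate h z) = conjugate (g \<otimes> h) z"
  by (simp add: conjugate_def m_assoc inv_mult_group)

lemma conjugate_inv_conjugate [simp]:
  "\<lbrakk>g \<in> carrier G; z \<in> carrier G\<rbrakk> \<Longrightarrow> conjugate (inv g) (conjugate g z) = z"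
  by (simp add: conjugate_def m_assoc)

lemma conjugate_conjugate_inv [simp]:
  "\<lbrakk>g \<in> carrier G; z \<in> carrier G\<rbrakk> \<Longrightarrow> conjugate g (conjugate (inv g) z) = z"
  by (simp add: conjugate_def m_assoc)

lemma conjugate_mult:
  "\<lbrakk>g \<in> carrier G; z \<in> carrier G; w \<in> carrier G\<rbrakk> \<Longrightarrow> conjugate g (z \<otimes> w) = conjugate g z \<otimes> conjugate g w"
  by (simp add: conjugate_def m_assoc)

lemma conjugate_inv: "\<lbrakk>g \<in> carrier G; z \<in> carrier G\<rbrakk> \<Longrightarrow> conjugate g (inv z) = inv (conjugate g z)"
  by (simp add: conjugate_def m_assoc inv_mult_group)

lemma conjugate_eqI:
  "\<lbrakk>g \<in> carrier G; z \<in> carrier G; w \<in> carrier G; g \<otimes> z = w \<otimes> g\<rbrakk> \<Longrightarrow> conjugate g z = w"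
  by (simp add: conjugate_def m_assoc)

lemma conjugate_fixed_iff:
  "\<lbrakk>g \<in> carrier G; z \<in> carrier G\<rbrakk> \<Longrightarrow> conjugate g z = z \<longleftrightarrow> g \<otimes> z = z \<otimes> g"
  unfolding conjugate_def by (metis inv_closed inv_solve_right' m_closed)

lemma conjugate_inv_fixed:
  "\<lbrakk>g \<in> carrier G; z \<in> carrier G; conjugate g z = z\<rbrakk> \<Longrightarrow> conjugate (inv g) z = z"
  by (metis conjugate_inv_conjugate)

lemma conjugate_square_fixed:
  "\<lbrakk>g \<in> carrier G; z \<in> carrier G; conjugate g z = w; conjugate g w = z\<rbrakk> \<Longrightarrow> conjugate (g \<otimes> g) z = z"
  by (simp add: conjugate_conjugate[symmetric])

lemma conjugate_commute:
  "\<lbrakk>g \<in> carrier G; h \<in> carrier G; z \<in> carrier G; g \<otimes> h = h \<otimes> g\<rbrakk>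
    \<Longrightarrow> conjugate g (conjugate h z) = conjugate h (conjugate g z)"
  by (simp add: conjugate_conjugate)

lemma conjugate_commute_fixed:
  "\<lbrakk>g \<in> carrier G; h \<in> carrier G; z \<in> carrier G; g \<otimes> h = h \<otimes> g; conjugate g z = z\<rbrakk>
    \<Longrightarrow> conjugate g (conjugate h z) = conjugate h z"
  by (metis conjugate_commute)

context
  fixes s t
  assumes s: "s \<in> carrier G" and t: "t \<in> carrier G" and braid: "s \<otimes> t \<otimes> s = t \<otimes> s \<otimes> t"
begin

lemma braid_conj_eq: "inv t \<otimes> s \<otimes> t = s \<otimes> t \<otimes> inv s"
proof -
  have "t \<otimes> (s \<otimes> t \<otimes> inv s) = s \<otimes> t"
    using braid s t by (metis inv_closed m_assoc m_closed r_inv r_one)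
  then show ?thesis using s t by (metis inv_solve_left m_assoc m_closed inv_closed)
qed

lemma braid_square_conj: "inv t \<otimes> (s \<otimes> s) \<otimes> t = s \<otimes> (t \<otimes> t) \<otimes> inv s"
proof -
  have "inv t \<otimes> (s \<otimes> s) \<otimes> t = (inv t \<otimes> s \<otimes> t) \<otimes> (inv t \<otimes> s \<otimes> t)"
    using s t by (simp add: m_assoc)
  also have "\<dots> = (s \<otimes> t \<otimes> inv s) \<otimes> (s \<otimes> t \<otimes> inv s)"
    by (simp only: braid_conj_eq)
  also have "\<dots> = s \<otimes> (t \<otimes> t) \<otimes> inv s"
    using s t by (simp add: m_assoc)
  finally show ?thesis .
qed

lemma braid_inv_rewrite: "t \<otimes> inv s \<otimes> inv t = inv t \<otimes> inv s \<otimes> inv t \<otimes> s \<otimes> s"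
proof -
  have "inv t \<otimes> inv s \<otimes> inv t \<otimes> s \<otimes> s = inv t \<otimes> inv s \<otimes> (inv t \<otimes> (s \<otimes> s) \<otimes> t) \<otimes> inv t"
    using s t by (simp add: m_assoc)
  also have "\<dots> = inv t \<otimes> inv s \<otimes> (s \<otimes> (t \<otimes> t) \<otimes> inv s) \<otimes> inv t"
    by (simp only: braid_square_conj)
  also have "\<dots> = t \<otimes> inv s \<otimes> inv t"
    using s t by (simp add: m_assoc)
  finally show ?thesis by simp
qed

end

end

section \<open>The Dynkin diagram of type D\<close>

lemma valid_N [simp]: "valid n (N k) \<longleftrightarrow> 2 \<le> k \<and> k \<le> n"
  by (auto simp: valid_def)

lemma valid_2' [simp]: "valid n N2'"
  by (simp add: valid_def)

lemma adjacent_sym: "adjacent n p q \<Longrightarrow> adjacent n q p"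
  unfolding adjacent_def by blast

lemma adjacent_N_Suc: "\<lbrakk>2 \<le> k; Suc k \<le> n\<rbrakk> \<Longrightarrow> adjacent n (N k) (N (Suc k))"
  by (auto simp: adjacent_def adj_lt_def)

lemma adjacent_Suc_N: "\<lbrakk>2 \<le> k; Suc k \<le> n\<rbrakk> \<Longrightarrow> adjacent n (N (Suc k)) (N k)"
  using adjacent_N_Suc adjacent_sym by blast

lemma adjacent_2'_3: "adjacent n N2' (N 3)"
  by (auto simp: adjacent_def adj_lt_def)

lemma adjacent_3_2': "adjacent n (N 3) N2'"
  by (auto simp: adjacent_def adj_lt_def)

lemma not_adjacent_N: "\<lbrakk>l \<noteq> Suc k; k \<noteq> Suc l\<rbrakk> \<Longrightarrow> \<not> adjacent n (N k) (N l)"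
  by (auto simp: adjacent_def adj_lt_def)

lemma not_adjacent_2'_N: "l \<noteq> 3 \<Longrightarrow> \<not> adjacent n N2' (N l)"
  by (auto simp: adjacent_def adj_lt_def)

lemma not_adjacent_N_2': "l \<noteq> 3 \<Longrightarrow> \<not> adjacent n (N l) N2'"
  by (auto simp: adjacent_def adj_lt_def)

section \<open>Roots of D_n and the action of the simple reflections\<close>

text \<open>A root \<open>\<plusminus>\<epsilon>\<^sub>j \<plusminus> \<epsilon>\<^sub>i\<close> with \<open>i < j\<close> is encoded as \<open>(j, i, \<sigma>, \<tau>)\<close>, the
  booleans being the signs (True for +); a signed unit vector \<open>\<plusminus>\<epsilon>\<^sub>c\<close> is encoded as \<open>(c, \<sigma>)\<close>.\<close>

type_synonym signed_root = "nat \<times> nat \<times> bool \<times> bool"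

definition refl_coord :: "node \<Rightarrow> nat \<times> bool \<Rightarrow> nat \<times> bool" where
  "refl_coord m p = (case m of
      N k \<Rightarrow> (if fst p = k then (k - 1, snd p) else if fst p = k - 1 then (k, snd p) else p)
    | N2' \<Rightarrow> (if fst p = 1 then (2, \<not> snd p) else if fst p = 2 then (1, \<not> snd p) else p))"

definition refl_root :: "node \<Rightarrow> signed_root \<Rightarrow> signed_root" where
  "refl_root m t = (case t of (j, i, \<sigma>, \<tau>) \<Rightarrow>
     (case refl_coord m (j, \<sigma>) of (j', \<sigma>') \<Rightarrow> (case refl_coord m (i, \<tau>) of (i', \<tau>') \<Rightarrow>
       if i' < j' then (j', i', \<sigma>', \<tau>') else (i', j', \<tau>', \<sigma>'))))"

definition is_root :: "nat \<Rightarrow> signed_root \<Rightarrow> bool" where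
  "is_root n t = (case t of (j, i, \<sigma>, \<tau>) \<Rightarrow> 1 \<le> i \<and> i < j \<and> j \<le> n)"

definition refl_root_word :: "node word \<Rightarrow> signed_root \<Rightarrow> signed_root" where
  "refl_root_word w t = foldr (\<lambda>(b, k) u. refl_root k u) w t"

lemma refl_root_eq:
  "refl_root m (j, i, \<sigma>, \<tau>) = (let (j', \<sigma>') = refl_coord m (j, \<sigma>); (i', \<tau>') = refl_coord m (i, \<tau>) in
     if i' < j' then (j', i', \<sigma>', \<tau>') else (i', j', \<tau>', \<sigma>'))"
  unfolding refl_root_def by (simp add: Let_def split: prod.split)

lemma refl_root_down: "i + 1 < j \<Longrightarrow> refl_root (N j) (j, i, \<sigma>, \<tau>) = (j - 1, i, \<sigma>, \<tau>)"
  by (auto simp: refl_root_eq refl_coord_def)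

lemma refl_root_up: "i < j \<Longrightarrow> refl_root (N (Suc j)) (j, i, \<sigma>, \<tau>) = (Suc j, i, \<sigma>, \<tau>)"
  by (auto simp: refl_root_eq refl_coord_def)

lemma refl_root_swap: "2 \<le> j \<Longrightarrow> refl_root (N j) (j, j - 1, \<sigma>, \<tau>) = (j, j - 1, \<tau>, \<sigma>)"
  by (auto simp: refl_root_eq refl_coord_def)

lemma refl_root_lower_second: "3 \<le> j \<Longrightarrow> refl_root (N (j - 1)) (j, j - 1, \<sigma>, \<tau>) = (j, j - 2, \<sigma>, \<tau>)"
  by (auto simp: refl_root_eq refl_coord_def)

lemma refl_root_raise_second: "3 \<le> j \<Longrightarrow> refl_root (N (j - 1)) (j, j - 2, \<sigma>, \<tau>) = (j, j - 1, \<sigma>, \<tau>)"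
  by (auto simp: refl_root_eq refl_coord_def)

lemma refl_root_fix_below: "i + 2 < j \<Longrightarrow> refl_root (N (j - 1)) (j, i, \<sigma>, \<tau>) = (j, i, \<sigma>, \<tau>)"
  by (auto simp: refl_root_eq refl_coord_def)

lemma refl_root_fix_far: "j + 2 \<le> k \<Longrightarrow> i < j \<Longrightarrow> refl_root (N k) (j, i, \<sigma>, \<tau>) = (j, i, \<sigma>, \<tau>)"
  by (auto simp: refl_root_eq refl_coord_def)

lemma refl_root_fix_top:
  "\<lbrakk>refl_coord m (j, \<sigma>) = (j, \<sigma>); refl_coord m (i, \<tau>) = (i', \<tau>'); i' < j\<rbrakk>
    \<Longrightarrow> refl_root m (j, i, \<sigma>, \<tau>) = (j, i', \<sigma>, \<tau>')"
  by (simp add: refl_root_eq)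

lemma refl_root_2'_21: "refl_root N2' (2, 1, \<sigma>, \<tau>) = (2, 1, \<not> \<tau>, \<not> \<sigma>)"
  by (auto simp: refl_root_eq refl_coord_def)

lemma refl_root_2'_31: "refl_root N2' (3, 1, \<sigma>, \<tau>) = (3, 2, \<sigma>, \<not> \<tau>)"
  by (auto simp: refl_root_eq refl_coord_def)

lemma refl_root_2'_32: "refl_root N2' (3, 2, \<sigma>, \<tau>) = (3, 1, \<sigma>, \<not> \<tau>)"
  by (auto simp: refl_root_eq refl_coord_def)

lemma refl_coord_N_above: "k < c \<Longrightarrow> refl_coord (N k) (c, s) = (c, s)"
  by (auto simp: refl_coord_def)

lemma refl_coord_2'_above: "3 \<le> c \<Longrightarrow> refl_coord N2' (c, s) = (c, s)"
  by (auto simp: refl_coord_def)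

lemma refl_coord_N_bound: "\<lbrakk>k < K; i < K\<rbrakk> \<Longrightarrow> fst (refl_coord (N k) (i, s)) < K"
  by (auto simp: refl_coord_def)

lemma refl_coord_2'_bound: "\<lbrakk>3 \<le> K; i < K\<rbrakk> \<Longrightarrow> fst (refl_coord N2' (i, s)) < K"
  by (auto simp: refl_coord_def)

lemma refl_coord_fst_le: "fst (refl_coord m (c, s)) \<le> max (Suc c) 2"
  by (auto simp: refl_coord_def split: node.split)

lemma refl_coord_fst_Suc: "\<lbrakk>fst (refl_coord m (c, s)) = Suc c; 2 \<le> c\<rbrakk> \<Longrightarrow> m = N (Suc c)"
  by (cases m) (auto simp: refl_coord_def split: if_splits)

lemma refl_coord_fst_ge1: "\<lbrakk>1 \<le> c; valid n m\<rbrakk> \<Longrightarrow> 1 \<le> fst (refl_coord m (c, s))"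
  by (cases m) (auto simp: refl_coord_def valid_def)

lemma refl_coord_fst_le_n: "\<lbrakk>valid n m; 2 \<le> n; c \<le> n\<rbrakk> \<Longrightarrow> fst (refl_coord m (c, s)) \<le> n"
  by (cases m) (auto simp: refl_coord_def valid_def)

lemma refl_coord_fst_inj:
  "\<lbrakk>valid n m; 1 \<le> c; 1 \<le> d; c \<noteq> d\<rbrakk> \<Longrightarrow> fst (refl_coord m (c, s)) \<noteq> fst (refl_coord m (d, s'))"
  by (cases m) (auto simp: refl_coord_def valid_def)

lemma refl_root_fst:
  "fst (refl_root m (j, i, \<sigma>, \<tau>)) = max (fst (refl_coord m (j, \<sigma>))) (fst (refl_coord m (i, \<tau>)))"
  by (simp add: refl_root_eq split: prod.split)

lemma refl_root_fst_cases:
  assumes "i < j" "j < J" "fst (refl_root m (j, i, \<sigma>, \<tau>)) \<le> J" "3 \<le> J"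
  shows "fst (refl_root m (j, i, \<sigma>, \<tau>)) < J \<or> (m = N J \<and> j = J - 1)"
proof (rule ccontr)
  assume c: "\<not> ?thesis"
  then have "fst (refl_root m (j, i, \<sigma>, \<tau>)) = J" using assms(3) by simp
  then have "fst (refl_coord m (j, \<sigma>)) = J \<or> fst (refl_coord m (i, \<tau>)) = J"
    by (simp add: refl_root_fst max_def split: if_splits)
  then show False
  proof
    assume h: "fst (refl_coord m (j, \<sigma>)) = J"
    with refl_coord_fst_le[of m j \<sigma>] assms have "J = Suc j" by auto
    with h assms have "m = N J" using refl_coord_fst_Suc[of m j \<sigma>] by (cases "j \<ge> 2") auto
    with c \<open>J = Suc j\<close> show False by simp
  next
    assume "fst (refl_coord m (i, \<tau>)) = J"
    with refl_coord_fst_le[of m i \<tau>] assms show False by auto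
  qed
qed

lemma is_root_refl_root:
  assumes "is_root n t" "valid n m" "2 \<le> n"
  shows "is_root n (refl_root m t)"
proof -
  obtain j i \<sigma> \<tau> where t: "t = (j, i, \<sigma>, \<tau>)" by (cases t)
  have h: "1 \<le> i" "i < j" "j \<le> n" using assms(1) t by (auto simp: is_root_def)
  obtain j' \<sigma>' where j': "refl_coord m (j, \<sigma>) = (j', \<sigma>')" by fastforce
  obtain i' \<tau>' where i': "refl_coord m (i, \<tau>) = (i', \<tau>')" by fastforce
  have "1 \<le> j'" "1 \<le> i'"
    using refl_coord_fst_ge1[of j n m \<sigma>] refl_coord_fst_ge1[of i n m \<tau>] j' i' h assms by auto
  moreover have "j' \<le> n" "i' \<le> n"
    using refl_coord_fst_le_n[of n m j \<sigma>] refl_coord_fst_le_n[of n m i \<tau>] j' i' h assms by auto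
  moreover have "j' \<noteq> i'"
    using refl_coord_fst_inj[of n m j i \<sigma> \<tau>] j' i' h assms by auto
  ultimately show ?thesis unfolding t by (auto simp: refl_root_eq j' i' is_root_def)
qed

lemma refl_root_word_Nil [simp]: "refl_root_word [] t = t"
  by (simp add: refl_root_word_def)

lemma refl_root_word_Cons [simp]: "refl_root_word ((b, k) # w) t = refl_root k (refl_root_word w t)"
  by (simp add: refl_root_word_def)

lemma is_root_refl_root_word: "\<lbrakk>Br_word n w; is_root n t; 2 \<le> n\<rbrakk> \<Longrightarrow> is_root n (refl_root_word w t)"
  by (induction w) (auto simp: Br_word_def intro: is_root_refl_root)

definition sgn_bool :: "bool \<Rightarrow> int" where
  "sgn_bool b = (if b then 1 else -1)"

definition signed_pair_vec :: "nat \<times> bool \<Rightarrow> nat \<times> bool \<Rightarrow> nat \<Rightarrow> int" where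
  "signed_pair_vec p q c =
     (if c = fst p then sgn_bool (snd p) else 0) + (if c = fst q then sgn_bool (snd q) else 0)"

definition root_vec :: "signed_root \<Rightarrow> nat \<Rightarrow> int" where
  "root_vec t = (case t of (j, i, \<sigma>, \<tau>) \<Rightarrow> signed_pair_vec (j, \<sigma>) (i, \<tau>))"

definition swap_pred :: "nat \<Rightarrow> nat \<Rightarrow> nat" where
  "swap_pred k c = (if c = k then k - 1 else if c = k - 1 then k else c)"

lemma refl_N:
  assumes "2 \<le> k" "k \<le> n"
  shows "refl n (N k) v = (\<lambda>c. v (swap_pred k c))"
proof -
  have "(\<Sum>i\<in>{1..n}. v i * root (N k) i)
      = (\<Sum>i\<in>{1..n}. (if i = k then v i else 0) + (if i = k - 1 then - v i else 0))"
    by (rule sum.cong) (use assms in \<open>auto simp: root_def\<close>)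
  also have "\<dots> = v k - v (k - 1)"
    using assms by (auto simp: sum.distrib)
  finally show ?thesis
    unfolding refl_def using assms by (auto simp: root_def swap_pred_def)
qed

lemma refl_2':
  assumes "2 \<le> n"
  shows "refl n N2' v = (\<lambda>c. if c = 1 then - v 2 else if c = 2 then - v 1 else v c)"
proof -
  have "(\<Sum>i\<in>{1..n}. v i * root N2' i) = (\<Sum>i\<in>{1..n}. (if i = 1 then v i else 0) + (if i = 2 then v i else 0))"
    by (rule sum.cong) (use assms in \<open>auto simp: root_def\<close>)
  also have "\<dots> = v 1 + v 2"
    using assms by (simp add: sum.distrib)
  finally show ?thesis
    unfolding refl_def using assms by (auto simp: root_def)
qed

lemma refl_involution: "\<lbrakk>valid n m; 2 \<le> n\<rbrakk> \<Longrightarrow> refl n m (refl n m v) = v"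
  by (cases m) (auto simp: valid_def refl_N refl_2' swap_pred_def)

lemma root_vec_refl_root:
  assumes "valid n m" "2 \<le> n"
  shows "root_vec (refl_root m t) = refl n m (root_vec t)"
proof -
  obtain j i \<sigma> \<tau> where t: "t = (j, i, \<sigma>, \<tau>)" by (cases t)
  have "root_vec (refl_root m t) = signed_pair_vec (refl_coord m (j, \<sigma>)) (refl_coord m (i, \<tau>))"
    by (auto simp: t root_vec_def refl_root_eq signed_pair_vec_def split: prod.split)
  also have "\<dots> = refl n m (root_vec t)"
  proof (cases m)
    case (N k)
    then have k: "2 \<le> k" "k \<le> n" using assms by (auto simp: valid_def)
    show ?thesis unfolding N refl_N[OF k]
      by (rule ext) (use k in \<open>auto simp: t root_vec_def signed_pair_vec_def refl_coord_def swap_pred_def\<close>)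
  next
    case N2'
    show ?thesis unfolding N2' refl_2'[OF assms(2)]
      by (rule ext) (auto simp: t root_vec_def signed_pair_vec_def refl_coord_def sgn_bool_def)
  qed
  finally show ?thesis .
qed

lemma root_vec_inj:
  assumes "is_root n t" "is_root n t'" "root_vec t = root_vec t'"
  shows "t = t'"
proof -
  obtain j i \<sigma> \<tau> where t: "t = (j, i, \<sigma>, \<tau>)" by (cases t)
  obtain j' i' \<sigma>' \<tau>' where t': "t' = (j', i', \<sigma>', \<tau>')" by (cases t')
  have eq: "signed_pair_vec (j, \<sigma>) (i, \<tau>) c = signed_pair_vec (j', \<sigma>') (i', \<tau>') c" for c
    using assms(3) unfolding t t' root_vec_def by simp
  have ij: "i < j" "i' < j'" using assms unfolding t t' is_root_def by auto
  have support: "signed_pair_vec (j, \<sigma>) (i, \<tau>) c \<noteq> 0 \<longleftrightarrow> c = j \<or> c = i"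
    "signed_pair_vec (j', \<sigma>') (i', \<tau>') c \<noteq> 0 \<longleftrightarrow> c = j' \<or> c = i'" for c
    using ij by (auto simp: signed_pair_vec_def sgn_bool_def)
  have "(c = j \<or> c = i) \<longleftrightarrow> (c = j' \<or> c = i')" for c
    using eq[of c] support[of c] by simp
  then have "j = j' \<and> i = i'"
    using ij by (metis less_asym)
  moreover have "\<sigma> = \<sigma>'" "\<tau> = \<tau>'"
    using eq[of j] eq[of i] ij calculation by (simp_all add: signed_pair_vec_def sgn_bool_def split: if_splits)
  ultimately show ?thesis using t t' by simp
qed

lemma refl_root_involution:
  assumes "is_root n t" "valid n m" "2 \<le> n"
  shows "refl_root m (refl_root m t) = t"
proof (rule root_vec_inj[OF _ assms(1)])
  show "is_root n (refl_root m (refl_root m t))"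
    using is_root_refl_root assms by blast
  show "root_vec (refl_root m (refl_root m t)) = root_vec t"
    using root_vec_refl_root[OF assms(2,3)] refl_involution[OF assms(2,3)] by simp
qed

lemma to_W_Nil: "to_W n [] = id"
  by (simp add: to_W_def)

lemma to_W_Cons: "to_W n ((b, k) # w) = refl n k \<circ> to_W n w"
  by (simp add: to_W_def)

lemma to_W_append: "to_W n (u @ w) = to_W n u \<circ> to_W n w"
  by (induction u) (auto simp: to_W_Nil to_W_Cons)

lemma to_W_root_vec:
  "\<lbrakk>Br_word n w; is_root n t; 2 \<le> n\<rbrakk> \<Longrightarrow> to_W n w (root_vec t) = root_vec (refl_root_word w t)"
proof (induction w)
  case Nil
  then show ?case by (simp add: to_W_Nil)
next
  case (Cons x w)
  obtain b k where x: "x = (b, k)" by (cases x)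
  have "Br_word n w" "valid n k" using Cons.prems x by (auto simp: Br_word_def)
  then show ?case
    using Cons x root_vec_refl_root[of n k "refl_root_word w t"] by (simp add: to_W_Cons)
qed

lemma refl_root_word_pure: "\<lbrakk>in_PBr n w; is_root n t; 2 \<le> n\<rbrakk> \<Longrightarrow> refl_root_word w t = t"
  unfolding in_PBr_def using to_W_root_vec root_vec_inj is_root_refl_root_word by (metis id_apply)

lemma in_PBr_conj:
  assumes "in_PBr n \<omega>" "valid n k" "2 \<le> n"
  shows "in_PBr n ((True, k) # \<omega> @ [(False, k)])"
proof -
  have "to_W n ((True, k) # \<omega> @ [(False, k)]) = refl n k \<circ> refl n k"
    using assms by (simp add: to_W_Cons to_W_append to_W_Nil in_PBr_def)
  also have "\<dots> = id"
    using refl_involution[OF assms(2,3)] by (simp add: fun_eq_iff)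
  finally show ?thesis using assms by (auto simp: in_PBr_def Br_word_def)
qed

section \<open>Groups satisfying the defining relations of Br(D_n, A)\<close>

locale brA_relations = group G for G :: "('g, 'b) monoid_scheme" (structure) +
  fixes n :: nat and gen :: "node \<Rightarrow> 'a::comm_ring_1 \<Rightarrow> 'g"
  assumes gen_closed [simp]: "gen k a \<in> carrier G"
    and rel_square: "valid n k \<Longrightarrow> gen k a \<otimes> gen k 0 \<otimes> gen k b = gen k 0 \<otimes> gen k 0 \<otimes> gen k (a + b)"
    and rel_commute:
      "\<lbrakk>valid n k; valid n l; k \<noteq> l; \<not> adjacent n k l\<rbrakk> \<Longrightarrow> gen k a \<otimes> gen l b = gen l b \<otimes> gen k a"
    and rel_braid:
      "adj_lt n k l \<Longrightarrow> gen k a \<otimes> gen l b \<otimes> gen k c = gen l c \<otimes> gen k (b + a * c) \<otimes> gen l a"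
    and n_ge_3: "3 \<le> n"
begin

lemma two_le_n: "2 \<le> n"
  using n_ge_3 by simp

abbreviation S :: "node \<Rightarrow> 'g" where
  "S k \<equiv> gen k 0"

definition X :: "node \<Rightarrow> 'a \<Rightarrow> 'g" where
  "X k a = gen k a \<otimes> inv (S k)"

lemma X_closed [simp]: "X k a \<in> carrier G"
  by (simp add: X_def)

lemma rel_braid_left: "adj_lt n k l \<Longrightarrow> gen k a \<otimes> S l \<otimes> S k = S l \<otimes> S k \<otimes> gen l a"
  using rel_braid[of k l a 0 0] by simp

lemma rel_braid_right: "adj_lt n k l \<Longrightarrow> S k \<otimes> S l \<otimes> gen k c = gen l c \<otimes> S k \<otimes> S l"
  using rel_braid[of k l 0 0 c] by simp

lemma rel_braid_middle: "adj_lt n k l \<Longrightarrow> S k \<otimes> gen l b \<otimes> S k = S l \<otimes> gen k b \<otimes> S l"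
  using rel_braid[of k l 0 b 0] by simp

lemma S_braid_lt: "adj_lt n k l \<Longrightarrow> S k \<otimes> S l \<otimes> S k = S l \<otimes> S k \<otimes> S l"
  using rel_braid[of k l 0 0 0] by simp

lemma S_braid: "adjacent n p q \<Longrightarrow> S p \<otimes> S q \<otimes> S p = S q \<otimes> S p \<otimes> S q"
  unfolding adjacent_def using S_braid_lt by metis

lemma conjugate_braid:
  "\<lbrakk>adjacent n p q; z \<in> carrier G\<rbrakk>
    \<Longrightarrow> conjugate (S p) (conjugate (S q) (conjugate (S p) z))
      = conjugate (S q) (conjugate (S p) (conjugate (S q) z))"
  using S_braid[of p q] by (simp add: conjugate_conjugate m_assoc)

lemma conjugate_braid_inv:
  assumes A: "adjacent n p q" and z: "z \<in> carrier G"
  shows "conjugate (S p) (conjugate (inv (S q)) z)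
    = conjugate (inv (S q)) (conjugate (inv (S p)) (conjugate (S q) (conjugate (S p) z)))"
proof -
  have b: "inv (S p) \<otimes> S q \<otimes> S p = S q \<otimes> S p \<otimes> inv (S q)"
    by (rule braid_conj_eq) (use S_braid[OF adjacent_sym[OF A]] in simp_all)
  have "inv (S q) \<otimes> (inv (S p) \<otimes> (S q \<otimes> S p)) = inv (S q) \<otimes> (S q \<otimes> S p \<otimes> inv (S q))"
    using b by (simp add: m_assoc)
  then have "S p \<otimes> inv (S q) = inv (S q) \<otimes> (inv (S p) \<otimes> (S q \<otimes> S p))"
    by (simp add: m_assoc)
  then show ?thesis using z by (simp add: conjugate_conjugate m_assoc)
qed

lemma X_conj_adj_lt_left: assumes "adj_lt n k l" shows "conjugate (S l \<otimes> S k) (X l a) = X k a"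
proof -
  have "conjugate (S l \<otimes> S k) (gen l a) = gen k a"
    by (rule conjugate_eqI) (use rel_braid_left[OF assms, of a] in \<open>simp_all add: m_assoc\<close>)
  moreover have "conjugate (S l \<otimes> S k) (S l) = S k"
    by (rule conjugate_eqI) (use S_braid_lt[OF assms] in \<open>simp_all add: m_assoc\<close>)
  ultimately show ?thesis by (simp add: conjugate_mult conjugate_inv X_def)
qed

lemma X_conj_adj_lt_right: assumes "adj_lt n k l" shows "conjugate (S k \<otimes> S l) (X k a) = X l a"
proof -
  have "conjugate (S k \<otimes> S l) (gen k a) = gen l a"
    by (rule conjugate_eqI) (use rel_braid_right[OF assms, of a] in \<open>simp_all add: m_assoc\<close>)
  moreover have "conjugate (S k \<otimes> S l) (S k) = S l"
    by (rule conjugate_eqI) (use S_braid_lt[OF assms] in \<open>simp_all add: m_assoc\<close>)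
  ultimately show ?thesis by (simp add: conjugate_mult conjugate_inv X_def)
qed

lemma X_conj_adjacent: "adjacent n p q \<Longrightarrow> conjugate (S q \<otimes> S p) (X q a) = X p a"
  unfolding adjacent_def using X_conj_adj_lt_left X_conj_adj_lt_right by blast

text \<open>Here \<open>rel_braid_middle\<close> and \<open>rel_braid_left\<close>/\<open>rel_braid_right\<close> express \<open>gen l a\<close>
  through \<open>gen k a\<close> (and conversely) in two different ways; comparing them gives the invariance.\<close>

lemma X_conj_square_adj_lt_left:
  assumes A: "adj_lt n k l"
  shows "conjugate (S k \<otimes> S k) (X l a) = X l a"
proof -
  let ?s = "S k" and ?t = "S l" and ?yk = "gen k a" and ?yl = "gen l a"
  have e1: "?yl = inv ?s \<otimes> (?t \<otimes> ?yk \<otimes> ?t) \<otimes> inv ?s"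
    by (rule mult_solve_middle) (use rel_braid_middle[OF A, of a] in simp_all)
  have e2: "?yl = ?s \<otimes> ?t \<otimes> ?yk \<otimes> inv ?t \<otimes> inv ?s"
    using rel_braid_right[OF A, of a] by (simp add: m_assoc)
  have "?s \<otimes> ?s \<otimes> (?yl \<otimes> inv ?t) = ?s \<otimes> ?t \<otimes> ?yk \<otimes> (?t \<otimes> inv ?s \<otimes> inv ?t)"
    by (subst e1) (simp add: m_assoc)
  also have "\<dots> = ?s \<otimes> ?t \<otimes> ?yk \<otimes> (inv ?t \<otimes> inv ?s \<otimes> inv ?t \<otimes> ?s \<otimes> ?s)"
    by (subst braid_inv_rewrite) (use S_braid_lt[OF A] in simp_all)
  also have "\<dots> = (?yl \<otimes> inv ?t) \<otimes> (?s \<otimes> ?s)"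
    by (subst e2) (simp add: m_assoc)
  finally show ?thesis unfolding X_def by (intro conjugate_eqI) simp_all
qed

lemma X_conj_square_adj_lt_right:
  assumes A: "adj_lt n k l"
  shows "conjugate (S l \<otimes> S l) (X k a) = X k a"
proof -
  let ?s = "S k" and ?t = "S l" and ?yk = "gen k a" and ?yl = "gen l a"
  have e1: "?yk = inv ?t \<otimes> (?s \<otimes> ?yl \<otimes> ?s) \<otimes> inv ?t"
    by (rule mult_solve_middle) (use rel_braid_middle[OF A, of a] in simp_all)
  have e2: "?yk = ?t \<otimes> ?s \<otimes> ?yl \<otimes> inv ?s \<otimes> inv ?t"
    using rel_braid_left[OF A, of a] by (intro mult_solve_left3) simp_all
  have "?t \<otimes> ?t \<otimes> (?yk \<otimes> inv ?s) = ?t \<otimes> ?s \<otimes> ?yl \<otimes> (?s \<otimes> inv ?t \<otimes> inv ?s)"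
    by (subst e1) (simp add: m_assoc)
  also have "\<dots> = ?t \<otimes> ?s \<otimes> ?yl \<otimes> (inv ?s \<otimes> inv ?t \<otimes> inv ?s \<otimes> ?t \<otimes> ?t)"
    by (subst braid_inv_rewrite) (use S_braid_lt[OF A] in simp_all)
  also have "\<dots> = (?yk \<otimes> inv ?s) \<otimes> (?t \<otimes> ?t)"
    by (subst e2) (simp add: m_assoc)
  finally show ?thesis unfolding X_def by (intro conjugate_eqI) simp_all
qed

lemma X_conj_square_adjacent: "adjacent n p q \<Longrightarrow> conjugate (S q \<otimes> S q) (X p a) = X p a"
  unfolding adjacent_def using X_conj_square_adj_lt_left X_conj_square_adj_lt_right by blast

lemma X_conj_square_self:
  assumes "valid n k"
  shows "conjugate (S k \<otimes> S k) (X k a) = X k a"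
proof -
  have "conjugate (S k \<otimes> S k) (gen k a) = gen k a"
    by (rule conjugate_eqI) (use rel_square[OF assms, of a 0] in \<open>simp_all add: m_assoc\<close>)
  moreover have "conjugate (S k \<otimes> S k) (S k) = S k"
    by (rule conjugate_eqI) (simp_all add: m_assoc)
  ultimately show ?thesis by (simp add: conjugate_mult conjugate_inv X_def)
qed

lemma S_commute_nonadjacent:
  "\<lbrakk>valid n k; valid n l; k \<noteq> l; \<not> adjacent n k l\<rbrakk> \<Longrightarrow> S k \<otimes> S l = S l \<otimes> S k"
  using rel_commute[of k l 0 0] by simp

lemma X_conj_nonadjacent:
  assumes "valid n k" "valid n l" "k \<noteq> l" "\<not> adjacent n k l"
  shows "conjugate (S k) (X l a) = X l a"
proof -
  have "conjugate (S k) (gen l b) = gen l b" for b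
    by (rule conjugate_eqI) (use rel_commute[OF assms, of 0 b] in simp_all)
  then show ?thesis by (simp add: conjugate_mult conjugate_inv X_def)
qed

lemma S_N_commute:
  "\<lbrakk>2 \<le> k; k \<le> n; 2 \<le> l; l \<le> n; k \<noteq> l; l \<noteq> Suc k; k \<noteq> Suc l\<rbrakk>
    \<Longrightarrow> S (N k) \<otimes> S (N l) = S (N l) \<otimes> S (N k)"
  by (rule S_commute_nonadjacent) (auto simp: not_adjacent_N)

lemma X_N_conj_N:
  "\<lbrakk>2 \<le> k; k \<le> n; 2 \<le> l; l \<le> n; k \<noteq> l; l \<noteq> Suc k; k \<noteq> Suc l\<rbrakk>
    \<Longrightarrow> conjugate (S (N k)) (X (N l) a) = X (N l) a"
  by (rule X_conj_nonadjacent) (auto simp: not_adjacent_N)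

lemma S_2'_N_commute: "\<lbrakk>2 \<le> l; l \<le> n; l \<noteq> 3\<rbrakk> \<Longrightarrow> S N2' \<otimes> S (N l) = S (N l) \<otimes> S N2'"
  by (rule S_commute_nonadjacent) (auto simp: not_adjacent_2'_N)

lemma X_N_conj_2': "\<lbrakk>2 \<le> l; l \<le> n; l \<noteq> 3\<rbrakk> \<Longrightarrow> conjugate (S N2') (X (N l) a) = X (N l) a"
  by (rule X_conj_nonadjacent) (auto simp: not_adjacent_2'_N)

lemma X_2'_conj_N: "\<lbrakk>2 \<le> l; l \<le> n; l \<noteq> 3\<rbrakk> \<Longrightarrow> conjugate (S (N l)) (X N2' a) = X N2' a"
  by (rule X_conj_nonadjacent) (auto simp: not_adjacent_N_2')

lemma S_2'_2_commute: "S N2' \<otimes> S (N 2) = S (N 2) \<otimes> S N2'"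
  using S_2'_N_commute[of 2] n_ge_3 by simp

lemma adjacent_2_3: "adjacent n (N 2) (N 3)"
  using adjacent_N_Suc[of 2 n] n_ge_3 by (simp add: numeral_3_eq_3)

lemma adjacent_3_2: "adjacent n (N 3) (N 2)"
  using adjacent_sym[OF adjacent_2_3] .

text \<open>Since \<open>s\<^sub>p\<^sup>2\<close> and \<open>s\<^sub>q\<^sup>2\<close> are conjugate by \<open>s\<^sub>q\<close> (braid relation),
  invariance under one square transfers to the other.\<close>

lemma square_fix_transfer:
  assumes A: "adjacent n p q" and Z: "Z \<in> carrier G"
    and h: "conjugate (S q \<otimes> S q) (conjugate (inv (S p)) Z) = conjugate (inv (S p)) Z"
  shows "conjugate (S p \<otimes> S p) (conjugate (S q) Z) = conjugate (S q) Z"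
proof -
  have "inv (S q) \<otimes> (S p \<otimes> S p) \<otimes> S q = S p \<otimes> (S q \<otimes> S q) \<otimes> inv (S p)"
    by (rule braid_square_conj) (use S_braid[OF A] in simp_all)
  then have e: "S p \<otimes> S p \<otimes> S q = S q \<otimes> (S p \<otimes> (S q \<otimes> S q) \<otimes> inv (S p))"
    by (subst (asm) eq_commute) (simp add: m_assoc)
  have "conjugate (S p \<otimes> S p) (conjugate (S q) Z)
      = conjugate (S q) (conjugate (S p) (conjugate (S q \<otimes> S q) (conjugate (inv (S p)) Z)))"
    using Z by (simp add: conjugate_conjugate e m_assoc)
  also have "\<dots> = conjugate (S q) Z"
    using Z by (simp only: h) simp
  finally show ?thesis .
qed

lemma square_fixes_neg_X:
  assumes A: "adjacent n p q"
  shows "conjugate (S p \<otimes> S p) (conjugate (S q) (X q a)) = conjugate (S q) (X q a)"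
proof (rule square_fix_transfer[OF A])
  have "conjugate (S p \<otimes> S q) (X p a) = X q a"
    by (rule X_conj_adjacent[OF adjacent_sym[OF A]])
  then have e: "conjugate (inv (S p)) (X q a) = conjugate (S q) (X p a)"
    by (metis conjugate_conjugate conjugate_inv_conjugate X_closed conjugate_closed gen_closed)
  have "conjugate (S q \<otimes> S q) (conjugate (S q) (X p a)) = conjugate (S q) (conjugate (S q \<otimes> S q) (X p a))"
    by (simp add: conjugate_conjugate m_assoc)
  also have "\<dots> = conjugate (S q) (X p a)"
    using X_conj_square_adjacent[OF A, of a] by simp
  finally show "conjugate (S q \<otimes> S q) (conjugate (inv (S p)) (X q a)) = conjugate (inv (S p)) (X q a)"
    unfolding e .
qed simp

lemma square_fixes_conj_X:
  assumes A: "adjacent n p q" and vq: "valid n q"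
  shows "conjugate (S q \<otimes> S q) (conjugate (S p) (X q a)) = conjugate (S p) (X q a)"
proof (rule square_fix_transfer[OF adjacent_sym[OF A]])
  have "conjugate (S q) (conjugate (S q) (X q a)) = X q a"
    using X_conj_square_self[OF vq, of a] by (simp add: conjugate_conjugate)
  then have e: "conjugate (inv (S q)) (X q a) = conjugate (S q) (X q a)"
    by (metis conjugate_inv_conjugate X_closed gen_closed conjugate_closed)
  show "conjugate (S p \<otimes> S p) (conjugate (inv (S q)) (X q a)) = conjugate (inv (S q)) (X q a)"
    unfolding e by (rule square_fixes_neg_X[OF A])
qed simp

text \<open>\<open>Y j i \<sigma> \<tau> a\<close> is the element \<open>X\<^sup>a\<close> attached to the root \<open>(j, i, \<sigma>, \<tau>)\<close>: \<open>X (N j) a\<close> for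
  \<open>\<alpha>\<^sub>j = \<epsilon>\<^sub>j - \<epsilon>\<^sub>j\<^sub>-\<^sub>1\<close>, \<open>X N2' a\<close> for \<open>\<alpha>\<^sub>2\<^sub>' = \<epsilon>\<^sub>2 + \<epsilon>\<^sub>1\<close>, and otherwise the conjugate of a
  root element with smaller top index by \<open>s\<^sub>j\<close> (which swaps \<open>\<epsilon>\<^sub>j\<^sub>-\<^sub>1\<close> and \<open>\<epsilon>\<^sub>j\<close>), or by
  \<open>s\<^sub>j\<^sub>-\<^sub>1 s\<^sub>j\<close> (which moves \<open>\<epsilon>\<^sub>j\<^sub>-\<^sub>2, \<epsilon>\<^sub>j\<^sub>-\<^sub>1\<close> to \<open>\<epsilon>\<^sub>j\<^sub>-\<^sub>1, \<epsilon>\<^sub>j\<close>). Outside \<open>1 \<le> i < j\<close>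
  the value \<open>\<one>\<close> is junk.\<close>

fun Y :: "nat \<Rightarrow> nat \<Rightarrow> bool \<Rightarrow> bool \<Rightarrow> 'a \<Rightarrow> 'g" where
  "Y 0 i \<sigma> \<tau> a = \<one>"
| "Y (Suc 0) i \<sigma> \<tau> a = \<one>"
| "Y (Suc (Suc 0)) i \<sigma> \<tau> a =
    (if i = 1 then
       (if \<sigma> \<and> \<not> \<tau> then X (N 2) a
        else if \<not> \<sigma> \<and> \<tau> then conjugate (S (N 2)) (X (N 2) a)
        else if \<sigma> then X N2' a
        else conjugate (S N2') (X N2' a))
     else \<one>)"
| "Y (Suc (Suc (Suc m))) i \<sigma> \<tau> a =
    (if i < Suc (Suc m) then conjugate (S (N (Suc (Suc (Suc m))))) (Y (Suc (Suc m)) i \<sigma> \<tau> a)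
     else if i = Suc (Suc m) then
       (if \<sigma> \<and> \<not> \<tau> then X (N (Suc (Suc (Suc m)))) a
        else if \<not> \<sigma> \<and> \<tau> then conjugate (S (N (Suc (Suc (Suc m))))) (X (N (Suc (Suc (Suc m)))) a)
        else conjugate (S (N (Suc (Suc m))) \<otimes> S (N (Suc (Suc (Suc m))))) (Y (Suc (Suc m)) (Suc m) \<sigma> \<sigma> a))
     else \<one>)"

definition Y_at :: "signed_root \<Rightarrow> 'a \<Rightarrow> 'g" where
  "Y_at t a = (case t of (j, i, \<sigma>, \<tau>) \<Rightarrow> Y j i \<sigma> \<tau> a)"

lemma Y_closed [simp]: "Y j i \<sigma> \<tau> a \<in> carrier G"
  by (induction j i \<sigma> \<tau> a rule: Y.induct) auto

lemma Y_at_simp [simp]: "Y_at (j, i, \<sigma>, \<tau>) a = Y j i \<sigma> \<tau> a"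
  by (simp add: Y_at_def)

lemma Y_at_closed [simp]: "Y_at t a \<in> carrier G"
  by (cases t) auto

lemma Y_2_1:
  "Y 2 1 True False a = X (N 2) a" "Y 2 1 False True a = conjugate (S (N 2)) (X (N 2) a)"
  "Y 2 1 True True a = X N2' a" "Y 2 1 False False a = conjugate (S N2') (X N2' a)"
  by (simp_all add: numeral_2_eq_2)

lemma Y_ge3:
  assumes "3 \<le> j"
  shows "Y j i \<sigma> \<tau> a =
    (if i < j - 1 then conjugate (S (N j)) (Y (j - 1) i \<sigma> \<tau> a)
     else if i = j - 1 then
       (if \<sigma> \<and> \<not> \<tau> then X (N j) a
        else if \<not> \<sigma> \<and> \<tau> then conjugate (S (N j)) (X (N j) a)
        else conjugate (S (N (j - 1)) \<otimes> S (N j)) (Y (j - 1) (j - 2) \<sigma> \<sigma> a))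
     else \<one>)"
proof -
  obtain m where "j = Suc (Suc (Suc m))"
    using assms by (metis add.commute add_Suc_right le_Suc_ex numeral_3_eq_3 plus_1_eq_Suc)
  then show ?thesis by (simp add: numeral_2_eq_2)
qed

lemma Y_lower: "\<lbrakk>3 \<le> j; i < j - 1\<rbrakk> \<Longrightarrow> Y j i \<sigma> \<tau> a = conjugate (S (N j)) (Y (j - 1) i \<sigma> \<tau> a)"
  by (simp add: Y_ge3)

lemma Y_simple: "2 \<le> j \<Longrightarrow> Y j (j - 1) True False a = X (N j) a"
  by (cases "j = 2") (auto simp: Y_ge3 numeral_2_eq_2)

lemma Y_neg_simple: "2 \<le> j \<Longrightarrow> Y j (j - 1) False True a = conjugate (S (N j)) (X (N j) a)"
  by (cases "j = 2") (auto simp: Y_ge3 numeral_2_eq_2)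

lemma Y_equal_signs:
  "3 \<le> j \<Longrightarrow> Y j (j - 1) \<sigma> \<sigma> a = conjugate (S (N (j - 1)) \<otimes> S (N j)) (Y (j - 1) (j - 2) \<sigma> \<sigma> a)"
  by (simp add: Y_ge3)

lemma Y_3_2:
  "Y 3 2 True False a = X (N 3) a" "Y 3 2 False True a = conjugate (S (N 3)) (X (N 3) a)"
  "Y 3 2 \<sigma> \<sigma> a = conjugate (S (N 2) \<otimes> S (N 3)) (Y 2 1 \<sigma> \<sigma> a)"
  using Y_simple[of 3 a] Y_neg_simple[of 3 a] Y_equal_signs[of 3 \<sigma> a] by simp_all

lemma Y_conj_far:
  "\<lbrakk>2 \<le> j; j + 2 \<le> k; k \<le> n\<rbrakk> \<Longrightarrow> conjugate (S (N k)) (Y j i \<sigma> \<tau> a) = Y j i \<sigma> \<tau> a"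
proof (induction j arbitrary: i \<sigma> \<tau> rule: less_induct)
  case (less j)
  show ?case
  proof (cases "j = 2")
    case True
    have "conjugate (S (N k)) (X (N 2) a) = X (N 2) a" "S (N k) \<otimes> S (N 2) = S (N 2) \<otimes> S (N k)"
      "conjugate (S (N k)) (X N2' a) = X N2' a" "S (N k) \<otimes> S N2' = S N2' \<otimes> S (N k)"
      using X_N_conj_N[of k 2] S_N_commute[of k 2] X_2'_conj_N[of k] S_2'_N_commute[of k] less.prems True
      by auto
    then show ?thesis
      using True by (auto simp: Y_2_1 conjugate_commute_fixed numeral_2_eq_2 split: if_splits)
  next
    case False
    then have j3: "3 \<le> j" using less.prems by simp
    have "conjugate (S (N k)) (X (N j) a) = X (N j) a" "S (N k) \<otimes> S (N j) = S (N j) \<otimes> S (N k)"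
      "S (N k) \<otimes> S (N (j - 1)) = S (N (j - 1)) \<otimes> S (N k)"
      using X_N_conj_N[of k j] S_N_commute[of k j] S_N_commute[of k "j - 1"] less.prems j3 by auto
    moreover have "S (N k) \<otimes> (S (N (j - 1)) \<otimes> S (N j)) = (S (N (j - 1)) \<otimes> S (N j)) \<otimes> S (N k)"
      using calculation(2,3) by (simp add: m_assoc flip: m_assoc) (simp add: m_assoc)
    moreover have "conjugate (S (N k)) (Y (j - 1) i' \<sigma>' \<tau>' a) = Y (j - 1) i' \<sigma>' \<tau>' a" for i' \<sigma>' \<tau>'
      using less.IH[of "j - 1"] less.prems j3 by auto
    ultimately show ?thesis
      by (auto simp: Y_ge3[OF j3] conjugate_commute_fixed)
  qed
qed

definition equivariant_upto :: "nat \<Rightarrow> bool" where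
  "equivariant_upto J \<longleftrightarrow> (\<forall>j i \<sigma> \<tau> m a. 1 \<le> i \<longrightarrow> i < j \<longrightarrow> j \<le> J \<longrightarrow> valid n m \<longrightarrow>
     fst (refl_root m (j, i, \<sigma>, \<tau>)) \<le> J \<longrightarrow>
     conjugate (S m) (Y j i \<sigma> \<tau> a) = Y_at (refl_root m (j, i, \<sigma>, \<tau>)) a)"

lemma equivariant_uptoD:
  assumes "equivariant_upto J" "1 \<le> i" "i < j" "j \<le> J" "valid n m"
    and "refl_root m (j, i, \<sigma>, \<tau>) = (j', i', \<sigma>', \<tau>')" "j' \<le> J"
  shows "conjugate (S m) (Y j i \<sigma> \<tau> a) = Y j' i' \<sigma>' \<tau>' a"
  using assms unfolding equivariant_upto_def by (metis Y_at_simp fst_conv)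

lemma equivariant_upto_inv:
  assumes "equivariant_upto J" "1 \<le> i" "i < j" "j \<le> J" "valid n m"
    and "refl_root m (j, i, \<sigma>, \<tau>) = (j', i', \<sigma>', \<tau>')" "j' \<le> J"
  shows "conjugate (inv (S m)) (Y j' i' \<sigma>' \<tau>' a) = Y j i \<sigma> \<tau> a"
  using equivariant_uptoD[OF assms, of a] by (metis conjugate_inv_conjugate Y_closed gen_closed)

lemma Y_lift:
  assumes "2 \<le> K" "Suc K \<le> n"
  shows "conjugate (S (N K)) (conjugate (S (N (Suc K))) (Y K (K - 1) \<sigma> \<tau> a)) = Y (Suc K) K \<sigma> \<tau> a"
proof -
  have adj: "adjacent n (N (Suc K)) (N K)" using adjacent_Suc_N[OF assms] .
  consider "\<sigma>" "\<not> \<tau>" | "\<not> \<sigma>" "\<tau>" | "\<sigma> = \<tau>" by blast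
  then show ?thesis
  proof cases
    case 1
    then show ?thesis
      using X_conj_adjacent[OF adj, of a] Y_simple[of K a] Y_simple[of "Suc K" a] assms
      by (simp add: conjugate_conjugate)
  next
    case 2
    have "conjugate (S (N K)) (conjugate (S (N (Suc K))) (conjugate (S (N K)) (X (N K) a)))
        = conjugate (S (N (Suc K))) (conjugate (S (N K)) (conjugate (S (N (Suc K))) (X (N K) a)))"
      by (rule conjugate_braid[OF adjacent_sym[OF adj]]) simp
    also have "\<dots> = conjugate (S (N (Suc K))) (X (N (Suc K)) a)"
      using X_conj_adjacent[OF adj, of a] by (simp add: conjugate_conjugate)
    finally show ?thesis
      using 2 Y_neg_simple[of K a] Y_neg_simple[of "Suc K" a] assms by simp
  next
    case 3
    then show ?thesis
      using Y_equal_signs[of "Suc K" \<sigma> a] assms by (simp add: conjugate_conjugate)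
  qed
qed

lemma Y_conj_2'_3_equal_signs:
  "conjugate (S N2') (conjugate (S (N 3)) (Y 2 1 \<sigma> \<sigma> a)) = Y 3 2 \<sigma> (\<not> \<sigma>) a"
proof -
  have L: "conjugate (S N2' \<otimes> S (N 3)) (X N2' a) = X (N 3) a"
    using X_conj_adjacent[OF adjacent_3_2'] .
  show ?thesis
  proof (cases \<sigma>)
    case True
    then show ?thesis using L Y_2_1 Y_3_2 by (simp add: conjugate_conjugate)
  next
    case False
    have "conjugate (S N2') (conjugate (S (N 3)) (conjugate (S N2') (X N2' a)))
        = conjugate (S (N 3)) (conjugate (S N2') (conjugate (S (N 3)) (X N2' a)))"
      by (rule conjugate_braid[OF adjacent_2'_3]) simp
    also have "\<dots> = conjugate (S (N 3)) (X (N 3) a)"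
      using L by (simp add: conjugate_conjugate)
    finally show ?thesis using False Y_2_1 Y_3_2 by simp
  qed
qed

lemma Y_conj_2'_3_unequal_signs:
  "conjugate (S N2') (conjugate (S (N 3)) (Y 2 1 \<sigma> (\<not> \<sigma>) a)) = Y 3 2 \<sigma> \<sigma> a"
proof -
  have v3: "valid n (N 3)" using n_ge_3 by simp
  have L2: "conjugate (S (N 3) \<otimes> S (N 2)) (X (N 3) a) = X (N 2) a"
    using X_conj_adjacent[OF adjacent_2_3] .
  have L2': "conjugate (S (N 3) \<otimes> S N2') (X (N 3) a) = X N2' a"
    using X_conj_adjacent[OF adjacent_2'_3] .
  have comm: "conjugate (S N2') (conjugate (S (N 2)) Z) = conjugate (S (N 2)) (conjugate (S N2') Z)"
    if "Z \<in> carrier G" for Z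
    using that S_2'_2_commute by (simp add: conjugate_commute)
  let ?c2 = "conjugate (S (N 2))" and ?c3 = "conjugate (S (N 3))" and ?c2' = "conjugate (S N2')"
  show ?thesis
  proof (cases \<sigma>)
    case True
    have "?c2' (?c3 (X (N 2) a)) = ?c2' (conjugate (S (N 3) \<otimes> S (N 3)) (?c2 (X (N 3) a)))"
      by (simp only: L2[symmetric]) (simp add: conjugate_conjugate m_assoc)
    also have "\<dots> = ?c2' (?c2 (X (N 3) a))"
      by (simp only: square_fixes_conj_X[OF adjacent_2_3 v3])
    also have "\<dots> = ?c2 (?c2' (X (N 3) a))"
      by (simp add: comm)
    also have "\<dots> = ?c2 (conjugate (S (N 3) \<otimes> S (N 3)) (?c2' (X (N 3) a)))"
      by (simp only: square_fixes_conj_X[OF adjacent_2'_3 v3])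
    also have "\<dots> = conjugate (S (N 2) \<otimes> S (N 3)) (X N2' a)"
      by (simp only: L2'[symmetric]) (simp add: conjugate_conjugate m_assoc)
    finally show ?thesis using True Y_2_1 Y_3_2 by simp
  next
    case False
    have "?c2' (?c3 (?c2 (X (N 2) a))) = ?c2' (?c3 (?c2 (?c3 (?c2 (X (N 3) a)))))"
      by (simp only: L2[symmetric]) (simp add: conjugate_conjugate m_assoc)
    also have "\<dots> = ?c2' (?c2 (?c3 (?c2 (?c2 (X (N 3) a)))))"
      by (simp add: conjugate_braid[OF adjacent_3_2])
    also have "\<dots> = ?c2' (?c2 (?c3 (X (N 3) a)))"
      using X_conj_square_adjacent[OF adjacent_3_2, of a] by (simp add: conjugate_conjugate)
    also have "\<dots> = ?c2 (?c2' (?c3 (X (N 3) a)))"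
      by (simp add: comm)
    also have "\<dots> = ?c2 (?c2' (?c3 (?c2' (?c2' (X (N 3) a)))))"
      using X_conj_square_adjacent[OF adjacent_3_2', of a] by (simp add: conjugate_conjugate)
    also have "\<dots> = ?c2 (?c3 (?c2' (?c3 (?c2' (X (N 3) a)))))"
      by (simp add: conjugate_braid[OF adjacent_3_2'])
    also have "\<dots> = conjugate (S (N 2) \<otimes> S (N 3)) (?c2' (X N2' a))"
      by (simp only: L2'[symmetric]) (simp add: conjugate_conjugate m_assoc)
    finally show ?thesis using False Y_2_1 Y_3_2 by simp
  qed
qed

lemma Y_conj_2'_3: "conjugate (S N2') (conjugate (S (N 3)) (Y 2 1 \<sigma> \<tau> a)) = Y 3 2 \<sigma> (\<not> \<tau>) a"
  using Y_conj_2'_3_equal_signs[of \<sigma> a] Y_conj_2'_3_unequal_signs[of \<sigma> a] by (cases "\<tau> = \<sigma>") auto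

lemma square_fixes_lifted:
  assumes L: "2 \<le> L" "Suc (Suc L) \<le> n" and Q: "equivariant_upto (Suc L)" and i: "1 \<le> i" "i < L"
  shows "conjugate (S (N (Suc (Suc L))) \<otimes> S (N (Suc (Suc L)))) (conjugate (S (N (Suc L))) (Y L i \<sigma> \<tau> a))
    = conjugate (S (N (Suc L))) (Y L i \<sigma> \<tau> a)"
proof (rule square_fix_transfer[OF adjacent_Suc_N])
  let ?Z = "Y L i \<sigma> \<tau> a"
  have up: "conjugate (S (N (Suc L))) ?Z = Y (Suc L) i \<sigma> \<tau> a"
    by (rule equivariant_uptoD[OF Q]) (use L i in \<open>auto simp: refl_root_up\<close>)
  have down: "conjugate (S (N (Suc L))) (Y (Suc L) i \<sigma> \<tau> a) = ?Z"
    by (rule equivariant_uptoD[OF Q]) (use L i in \<open>auto simp: refl_root_down\<close>)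
  have "conjugate (S (N (Suc (Suc L)))) ?Z = ?Z"
    by (rule Y_conj_far) (use L in auto)
  then show "conjugate (S (N (Suc L)) \<otimes> S (N (Suc L))) (conjugate (inv (S (N (Suc (Suc L))))) ?Z)
      = conjugate (inv (S (N (Suc (Suc L))))) ?Z"
    using conjugate_square_fixed[OF _ _ up down] by (simp add: conjugate_inv_fixed)
qed (use L in auto)

lemma Y_conj_square_next:
  assumes K: "2 \<le> K" "Suc K \<le> n" and Q: "equivariant_upto K" and i: "1 \<le> i" "i < K"
  shows "conjugate (S (N (Suc K)) \<otimes> S (N (Suc K))) (Y K i \<sigma> \<tau> a) = Y K i \<sigma> \<tau> a"
proof -
  have adj: "adjacent n (N (Suc K)) (N K)" "adjacent n (N K) (N (Suc K))"
    using adjacent_Suc_N[OF K] adjacent_N_Suc[OF K] .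
  consider (lower) "i < K - 1" | (simple) "i = K - 1" "\<sigma>" "\<not> \<tau>" | (neg) "i = K - 1" "\<not> \<sigma>" "\<tau>"
    | (base) "i = K - 1" "\<sigma> = \<tau>" "K = 2" | (equal) "i = K - 1" "\<sigma> = \<tau>" "3 \<le> K"
    using i K by linarith
  then show ?thesis
  proof cases
    case lower
    then obtain L where L: "K = Suc L" "2 \<le> L" using K i by (cases K) auto
    then show ?thesis
      using square_fixes_lifted[of L i \<sigma> \<tau> a] Y_lower[of K i \<sigma> \<tau> a] Q K i lower by simp
  next
    case simple
    then show ?thesis using Y_simple[of K a] K X_conj_square_adjacent[OF adj(2), of a] by simp
  next
    case neg
    then show ?thesis using Y_neg_simple[of K a] K square_fixes_neg_X[OF adj(1), of a] by simp
  next
    case base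
    have "conjugate (S (N 3) \<otimes> S (N 3)) (X N2' a) = X N2' a"
      "conjugate (S (N 3) \<otimes> S (N 3)) (conjugate (S N2') (X N2' a)) = conjugate (S N2') (X N2' a)"
      by (rule X_conj_square_adjacent[OF adjacent_2'_3], rule square_fixes_neg_X[OF adjacent_3_2'])
    then show ?thesis
      using base Y_2_1 by (cases \<tau>) (simp_all add: numeral_3_eq_3 numeral_2_eq_2)
  next
    case equal
    then obtain L where L: "K = Suc L" "2 \<le> L" using K by (cases K) auto
    let ?Z = "Y L (L - 1) \<sigma> \<sigma> a" and ?sq = "S (N (Suc K)) \<otimes> S (N (Suc K))"
    have "S (N (Suc K)) \<otimes> S (N L) = S (N L) \<otimes> S (N (Suc K))"
      using S_N_commute[of "Suc K" L] L K by auto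
    then have "?sq \<otimes> S (N L) = S (N L) \<otimes> ?sq"
      by (intro square_commute) simp_all
    then have "conjugate ?sq (conjugate (S (N L) \<otimes> S (N K)) ?Z)
        = conjugate (S (N L)) (conjugate ?sq (conjugate (S (N K)) ?Z))"
      by (simp add: conjugate_conjugate[symmetric] conjugate_commute)
    also have "\<dots> = conjugate (S (N L) \<otimes> S (N K)) ?Z"
      using square_fixes_lifted[of L "L - 1" \<sigma> \<sigma> a] L K Q by (simp add: conjugate_conjugate)
    finally show ?thesis
      using Y_equal_signs[of K \<sigma> a] L equal by simp
  qed
qed

lemma equivariant_upto_2: "equivariant_upto 2"
  unfolding equivariant_upto_def
proof (intro allI impI)
  fix j i \<sigma> \<tau> m a
  assume h: "1 \<le> i" "i < j" "j \<le> (2::nat)" "valid n m" "fst (refl_root m (j, i, \<sigma>, \<tau>)) \<le> 2"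
  then have ji: "j = 2" "i = 1" by auto
  show "conjugate (S m) (Y j i \<sigma> \<tau> a) = Y_at (refl_root m (j, i, \<sigma>, \<tau>)) a"
  proof (cases m)
    case (N k)
    then have k: "2 \<le> k" "k \<le> n" using h by (auto simp: valid_def)
    consider "k = 2" | "k = 3" | "4 \<le> k" using k by linarith
    then show ?thesis
    proof cases
      case 1
      have "conjugate (S (N 2)) (conjugate (S (N 2)) (X (N 2) a)) = X (N 2) a"
        using X_conj_square_self[of "N 2" a] k 1 by (simp add: conjugate_conjugate)
      moreover have c: "conjugate (S (N 2)) (X N2' a) = X N2' a"
        using X_2'_conj_N[of 2 a] n_ge_3 by simp
      moreover have "conjugate (S (N 2)) (conjugate (S N2') (X N2' a)) = conjugate (S N2') (X N2' a)"
        by (rule conjugate_commute_fixed) (use c S_2'_2_commute in simp_all)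
      ultimately show ?thesis
        using refl_root_swap[of 2 \<sigma> \<tau>] N 1 ji Y_2_1 by (cases \<sigma>; cases \<tau>) simp_all
    next
      case 2
      have "refl_root m (j, i, \<sigma>, \<tau>) = (3, 1, \<sigma>, \<tau>)"
        using refl_root_up[of 1 2 \<sigma> \<tau>] N 2 ji by (simp add: numeral_3_eq_3)
      then show ?thesis using h by simp
    next
      case 3
      then show ?thesis using refl_root_fix_far[of j k i] Y_conj_far[of j k i \<sigma> \<tau> a] N ji k by simp
    qed
  next
    case N2'
    have "conjugate (S N2') (conjugate (S N2') (X N2' a)) = X N2' a"
      using X_conj_square_self[of "N2'" a] by (simp add: conjugate_conjugate valid_def)
    moreover have c: "conjugate (S N2') (X (N 2) a) = X (N 2) a"
      using X_N_conj_2'[of 2 a] n_ge_3 by simp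
    moreover have "conjugate (S N2') (conjugate (S (N 2)) (X (N 2) a)) = conjugate (S (N 2)) (X (N 2) a)"
      by (rule conjugate_commute_fixed) (use c S_2'_2_commute in simp_all)
    ultimately show ?thesis
      using refl_root_2'_21 N2' ji Y_2_1 by (cases \<sigma>; cases \<tau>) simp_all
  qed
qed

lemma equivariant_step_lower_commuting:
  assumes K: "2 \<le> K" "Suc K \<le> n" and Q: "equivariant_upto K" and vm: "valid n m" and i: "1 \<le> i" "i < K"
    and top: "refl_coord m (Suc K, \<sigma>) = (Suc K, \<sigma>)" "refl_coord m (K, \<sigma>) = (K, \<sigma>)"
    and low: "fst (refl_coord m (i, \<tau>)) < K"
    and cm: "S m \<otimes> S (N (Suc K)) = S (N (Suc K)) \<otimes> S m"
  shows "conjugate (S m) (Y (Suc K) i \<sigma> \<tau> a) = Y_at (refl_root m (Suc K, i, \<sigma>, \<tau>)) a"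
proof -
  obtain i' \<tau>' where i': "refl_coord m (i, \<tau>) = (i', \<tau>')" by fastforce
  have i'_bounds: "1 \<le> i'" "i' < K"
    using refl_coord_fst_ge1[OF _ vm, of i \<tau>] low i i' by auto
  have "conjugate (S m) (Y K i \<sigma> \<tau> a) = Y K i' \<sigma> \<tau>' a"
    by (rule equivariant_uptoD[OF Q _ _ _ vm refl_root_fix_top[OF top(2) i']]) (use i i'_bounds in auto)
  moreover have "conjugate (S m) (conjugate (S (N (Suc K))) (Y K i \<sigma> \<tau> a))
      = conjugate (S (N (Suc K))) (conjugate (S m) (Y K i \<sigma> \<tau> a))"
    by (rule conjugate_commute) (simp_all add: cm)
  ultimately show ?thesis
    using Y_lower[of "Suc K" i] Y_lower[of "Suc K" i'] refl_root_fix_top[OF top(1) i'] K i i'_bounds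
    by simp
qed

lemma Y_Suc_conj_S_pred_lower:
  assumes K: "2 \<le> K" "Suc K \<le> n" and i: "1 \<le> i" "i < K"
  shows "conjugate (S (N K)) (Y (Suc K) i \<sigma> \<tau> a) = Y_at (refl_root (N K) (Suc K, i, \<sigma>, \<tau>)) a"
proof (cases "i < K - 1")
  case True
  then obtain L where L: "K = Suc L" "2 \<le> L" using K i by (cases K) auto
  have "conjugate (S (N K)) (conjugate (S (N (Suc K))) (conjugate (S (N K)) (Y L i \<sigma> \<tau> a)))
      = conjugate (S (N (Suc K))) (conjugate (S (N K)) (conjugate (S (N (Suc K))) (Y L i \<sigma> \<tau> a)))"
    by (rule conjugate_braid[OF adjacent_N_Suc[OF K]]) simp
  moreover have "conjugate (S (N (Suc K))) (Y L i \<sigma> \<tau> a) = Y L i \<sigma> \<tau> a"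
    by (rule Y_conj_far) (use L K in auto)
  ultimately show ?thesis
    using Y_lower[of "Suc K" i] Y_lower[of K i] refl_root_fix_below[of i "Suc K" \<sigma> \<tau>] L True K by simp
next
  case False
  then have "i = K - 1" using i by simp
  then show ?thesis
    using Y_lift[OF K, of \<sigma> \<tau> a] Y_lower[of "Suc K" i] refl_root_raise_second[of "Suc K" \<sigma> \<tau>] K
    by (simp add: numeral_2_eq_2)
qed

lemma equivariant_step_lower_2':
  assumes K: "2 \<le> K" "Suc K \<le> n" and Q: "equivariant_upto K" and i: "1 \<le> i" "i < K"
  shows "conjugate (S N2') (Y (Suc K) i \<sigma> \<tau> a) = Y_at (refl_root N2' (Suc K, i, \<sigma>, \<tau>)) a"
proof (cases "K = 2")
  case True
  then have "i = 1" using i by simp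
  moreover have "Y 3 1 \<sigma> \<tau> a = conjugate (S (N 3)) (Y 2 1 \<sigma> \<tau> a)"
    using Y_lower[of 3 1 \<sigma> \<tau> a] by simp
  ultimately show ?thesis
    using True Y_conj_2'_3[of \<sigma> \<tau> a] refl_root_2'_31[of \<sigma> \<tau>] by simp
next
  case False
  then show ?thesis
    using equivariant_step_lower_commuting[OF K Q _ i] S_2'_N_commute[of "Suc K"] K i
    by (simp add: refl_coord_2'_above refl_coord_2'_bound)
qed

lemma equivariant_step_lower:
  assumes K: "2 \<le> K" "Suc K \<le> n" and Q: "equivariant_upto K" and vm: "valid n m" and i: "1 \<le> i" "i < K"
    and fa: "fst (refl_root m (Suc K, i, \<sigma>, \<tau>)) \<le> Suc K"
  shows "conjugate (S m) (Y (Suc K) i \<sigma> \<tau> a) = Y_at (refl_root m (Suc K, i, \<sigma>, \<tau>)) a"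
proof (cases m)
  case (N k)
  then have k: "2 \<le> k" "k \<le> n" using vm by (auto simp: valid_def)
  consider "K + 3 \<le> k" | "k = Suc (Suc K)" | "k = Suc K" | "k = K" | "k < K" by linarith
  then show ?thesis
  proof cases
    case 1
    then show ?thesis
      using N Y_conj_far[of "Suc K" k i \<sigma> \<tau> a] refl_root_fix_far[of "Suc K" k i \<sigma> \<tau>] K k i by simp
  next
    case 2
    then show ?thesis using N refl_root_up[of i "Suc K" \<sigma> \<tau>] fa i by simp
  next
    case 3
    have "conjugate (S (N (Suc K))) (conjugate (S (N (Suc K))) (Y K i \<sigma> \<tau> a)) = Y K i \<sigma> \<tau> a"
      using Y_conj_square_next[OF K Q i] by (simp add: conjugate_conjugate)
    then show ?thesis
      using N 3 refl_root_down[of i "Suc K" \<sigma> \<tau>] Y_lower[of "Suc K" i] K i by simp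
  next
    case 4
    then show ?thesis using N Y_Suc_conj_S_pred_lower[OF K i] by simp
  next
    case 5
    then show ?thesis
      using N equivariant_step_lower_commuting[OF K Q vm i] S_N_commute[of k "Suc K"] k K i
      by (simp add: refl_coord_N_above refl_coord_N_bound)
  qed
next
  case N2'
  then show ?thesis using equivariant_step_lower_2'[OF K Q i] by simp
qed

lemma Y_Suc_conj_S_pred_top:
  assumes K: "2 \<le> K" "Suc K \<le> n" and Q: "equivariant_upto K"
  shows "conjugate (S (N K)) (Y (Suc K) K \<sigma> \<tau> a) = Y (Suc K) (K - 1) \<sigma> \<tau> a"
proof -
  let ?Z = "Y K (K - 1) \<sigma> \<tau> a"
  have "conjugate (inv (S (N K))) ?Z = Y K (K - 1) \<tau> \<sigma> a"
    by (rule equivariant_upto_inv[OF Q]) (use K refl_root_swap[of K \<tau> \<sigma>] in auto)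
  moreover have "conjugate (S (N (Suc K)) \<otimes> S (N (Suc K))) (Y K (K - 1) \<tau> \<sigma> a) = Y K (K - 1) \<tau> \<sigma> a"
    by (rule Y_conj_square_next[OF K Q]) (use K in auto)
  ultimately have sq: "conjugate (S (N K) \<otimes> S (N K)) (conjugate (S (N (Suc K))) ?Z) = conjugate (S (N (Suc K))) ?Z"
    by (intro square_fix_transfer[OF adjacent_N_Suc[OF K]]) simp_all
  have "conjugate (S (N K)) (Y (Suc K) K \<sigma> \<tau> a) = conjugate (S (N K)) (conjugate (S (N K)) (conjugate (S (N (Suc K))) ?Z))"
    using Y_lift[OF K, of \<sigma> \<tau> a] by simp
  also have "\<dots> = conjugate (S (N (Suc K))) ?Z"
    using sq by (simp add: conjugate_conjugate m_assoc)
  also have "\<dots> = Y (Suc K) (K - 1) \<sigma> \<tau> a"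
    using Y_lower[of "Suc K" "K - 1" \<sigma> \<tau> a] K by simp
  finally show ?thesis .
qed

lemma Y_Suc_conj_S_top:
  assumes K: "2 \<le> K" "Suc K \<le> n" and Q: "equivariant_upto K"
  shows "conjugate (S (N (Suc K))) (Y (Suc K) K \<sigma> \<tau> a) = Y (Suc K) K \<tau> \<sigma> a"
proof -
  consider "\<sigma>" "\<not> \<tau>" | "\<not> \<sigma>" "\<tau>" | "\<sigma> = \<tau>" by blast
  then show ?thesis
  proof cases
    case 1
    then show ?thesis using Y_simple[of "Suc K" a] Y_neg_simple[of "Suc K" a] K by simp
  next
    case 2
    then show ?thesis
      using Y_simple[of "Suc K" a] Y_neg_simple[of "Suc K" a] X_conj_square_self[of "N (Suc K)" a] K
      by (simp add: conjugate_conjugate)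
  next
    case 3
    let ?Z = "Y K (K - 1) \<sigma> \<sigma> a"
    have "conjugate (S (N K)) ?Z = ?Z"
      by (rule equivariant_uptoD[OF Q]) (use K refl_root_swap[of K \<sigma> \<sigma>] in auto)
    moreover have "conjugate (S (N (Suc K))) (conjugate (S (N K)) (conjugate (S (N (Suc K))) ?Z))
        = conjugate (S (N K)) (conjugate (S (N (Suc K))) (conjugate (S (N K)) ?Z))"
      by (rule conjugate_braid[OF adjacent_Suc_N[OF K]]) simp
    ultimately show ?thesis
      using 3 Y_equal_signs[of "Suc K" \<sigma> a] K by (simp add: conjugate_conjugate[symmetric])
  qed
qed

lemma Y_Suc_unequal_signs_fixed:
  assumes K: "2 \<le> K" and "\<sigma> \<noteq> \<tau>"
    and cm: "S m \<otimes> S (N (Suc K)) = S (N (Suc K)) \<otimes> S m"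
    and cX: "conjugate (S m) (X (N (Suc K)) a) = X (N (Suc K)) a"
  shows "conjugate (S m) (Y (Suc K) K \<sigma> \<tau> a) = Y (Suc K) K \<sigma> \<tau> a"
proof -
  have "conjugate (S m) (conjugate (S (N (Suc K))) (X (N (Suc K)) a)) = conjugate (S (N (Suc K))) (X (N (Suc K)) a)"
    by (rule conjugate_commute_fixed) (use cm cX in simp_all)
  then show ?thesis
    using assms Y_simple[of "Suc K" a] Y_neg_simple[of "Suc K" a] by (cases \<sigma>) auto
qed

lemma equivariant_step_top_commuting:
  assumes K: "2 \<le> K" "Suc K \<le> n" and Q: "equivariant_upto K" and vm: "valid n m"
    and cmK: "S m \<otimes> S (N K) = S (N K) \<otimes> S m" and cmSK: "S m \<otimes> S (N (Suc K)) = S (N (Suc K)) \<otimes> S m"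
    and cX: "conjugate (S m) (X (N (Suc K)) a) = X (N (Suc K)) a"
    and fix_pred: "refl_root m (K, K - 1, \<sigma>, \<sigma>) = (K, K - 1, \<sigma>, \<sigma>)"
  shows "conjugate (S m) (Y (Suc K) K \<sigma> \<tau> a) = Y (Suc K) K \<sigma> \<tau> a"
proof (cases "\<sigma> = \<tau>")
  case True
  have "conjugate (S m) (Y K (K - 1) \<sigma> \<sigma> a) = Y K (K - 1) \<sigma> \<sigma> a"
    by (rule equivariant_uptoD[OF Q _ _ _ vm fix_pred]) (use K in auto)
  moreover have "S m \<otimes> (S (N K) \<otimes> S (N (Suc K))) = (S (N K) \<otimes> S (N (Suc K))) \<otimes> S m"
    using cmK cmSK by (simp add: m_assoc flip: m_assoc) (simp add: m_assoc)
  ultimately show ?thesis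
    using True Y_equal_signs[of "Suc K" \<sigma> a] K by (simp add: conjugate_commute_fixed)
next
  case False
  then show ?thesis using Y_Suc_unequal_signs_fixed[OF K(1) _ cmSK cX] by simp
qed

text \<open>When \<open>m\<close> is adjacent to \<open>K\<close> but not to \<open>K + 1\<close>, the root \<open>(K + 1, K, \<sigma>, \<sigma>)\<close> is reached
  through the braid relation of \<open>s\<^sub>m\<close> and \<open>s\<^sub>K\<close>, via roots with second index below \<open>K - 1\<close>.\<close>

lemma equivariant_step_top_adjacent:
  assumes K: "2 \<le> K" "Suc K \<le> n" and Q: "equivariant_upto K" and vm: "valid n m"
    and adj: "adjacent n m (N K)" and cm: "S m \<otimes> S (N (Suc K)) = S (N (Suc K)) \<otimes> S m"
    and cX: "conjugate (S m) (X (N (Suc K)) a) = X (N (Suc K)) a"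
    and route: "refl_root m (Suc K, K - 1, \<sigma>, \<sigma>) = (Suc K, i', \<sigma>, \<tau>')" "1 \<le> i'" "i' < K - 1"
  shows "conjugate (S m) (Y (Suc K) K \<sigma> \<tau> a) = Y (Suc K) K \<sigma> \<tau> a"
proof (cases "\<sigma> = \<tau>")
  case True
  let ?W = "Y (Suc K) (K - 1) \<sigma> \<sigma> a" and ?V = "Y (Suc K) i' \<sigma> \<tau>' a"
  have W: "Y (Suc K) K \<sigma> \<sigma> a = conjugate (inv (S (N K))) ?W"
    using Y_Suc_conj_S_pred_top[OF K Q, of \<sigma> \<sigma> a] by (metis conjugate_inv_conjugate Y_closed gen_closed)
  have V: "conjugate (S m) ?W = ?V"
    using equivariant_step_lower[OF K Q vm, of "K - 1" \<sigma> \<sigma> a] route K by simp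
  then have V': "conjugate (inv (S m)) ?V = ?W"
    by (metis conjugate_inv_conjugate Y_closed gen_closed)
  have "conjugate (S (N K)) ?V = ?V"
    using equivariant_step_lower[OF K Q _ route(2), of "N K" \<sigma> \<tau>' a]
      refl_root_fix_below[of i' "Suc K" \<sigma> \<tau>'] route K by simp
  then have "conjugate (S m) (conjugate (inv (S (N K))) ?W) = conjugate (inv (S (N K))) ?W"
    using conjugate_braid_inv[OF adj, of ?W] V V' by simp
  then show ?thesis using True W by simp
next
  case False
  then show ?thesis using Y_Suc_unequal_signs_fixed[OF K(1) _ cm cX] by simp
qed

lemma equivariant_step_top_N:
  assumes K: "2 \<le> K" "Suc K \<le> n" and Q: "equivariant_upto K" and k: "2 \<le> k" "k \<le> n"
    and fa: "fst (refl_root (N k) (Suc K, K, \<sigma>, \<tau>)) \<le> Suc K"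
  shows "conjugate (S (N k)) (Y (Suc K) K \<sigma> \<tau> a) = Y_at (refl_root (N k) (Suc K, K, \<sigma>, \<tau>)) a"
proof -
  have fix_top: "refl_root (N k) (Suc K, K, \<sigma>, \<tau>) = (Suc K, K, \<sigma>, \<tau>)" if "k < K"
    using that by (simp add: refl_root_fix_top refl_coord_N_above)
  consider "K + 3 \<le> k" | "k = Suc (Suc K)" | "k = Suc K" | "k = K" | "k + 2 \<le> K" | "k + 1 = K"
    by linarith
  then show ?thesis
  proof cases
    case 1
    then show ?thesis using Y_conj_far[of "Suc K" k K \<sigma> \<tau> a] refl_root_fix_far[of "Suc K" k K \<sigma> \<tau>] K k by simp
  next
    case 2
    then show ?thesis using refl_root_up[of K "Suc K" \<sigma> \<tau>] fa by simp
  next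
    case 3
    then show ?thesis using Y_Suc_conj_S_top[OF K Q] refl_root_swap[of "Suc K" \<sigma> \<tau>] K by simp
  next
    case 4
    then show ?thesis
      using Y_Suc_conj_S_pred_top[OF K Q] refl_root_lower_second[of "Suc K" \<sigma> \<tau>] K by (simp add: numeral_2_eq_2)
  next
    case 5
    have "refl_root (N k) (K, K - 1, \<sigma>, \<sigma>) = (K, K - 1, \<sigma>, \<sigma>)"
      using 5 k by (auto simp: refl_root_eq refl_coord_def)
    then show ?thesis
      using equivariant_step_top_commuting[OF K Q] fix_top 5 k K
        S_N_commute[of k K] S_N_commute[of k "Suc K"] X_N_conj_N[of k "Suc K" a] by simp
  next
    case 6
    have "refl_root (N k) (Suc K, K - 1, \<sigma>, \<sigma>) = (Suc K, K - 2, \<sigma>, \<sigma>)"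
      using 6 k by (auto simp: refl_root_eq refl_coord_def)
    then show ?thesis
      using equivariant_step_top_adjacent[OF K Q, of "N k"] fix_top 6 k K adjacent_N_Suc[of k n]
        S_N_commute[of k "Suc K"] X_N_conj_N[of k "Suc K" a] by auto
  qed
qed

lemma equivariant_step_top_2'_3:
  assumes Q: "equivariant_upto 2"
  shows "conjugate (S N2') (Y 3 2 \<sigma> \<tau> a) = Y 3 1 \<sigma> (\<not> \<tau>) a"
proof -
  let ?Z = "Y 2 1 \<sigma> (\<not> \<tau>) a"
  have "conjugate (inv (S N2')) ?Z = Y 2 1 \<tau> (\<not> \<sigma>) a"
    by (rule equivariant_upto_inv[OF Q]) (use refl_root_2'_21[of \<tau> "\<not> \<sigma>"] in auto)
  moreover have "conjugate (S (N 3) \<otimes> S (N 3)) (Y 2 1 \<tau> (\<not> \<sigma>) a) = Y 2 1 \<tau> (\<not> \<sigma>) a"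
    using Y_conj_square_next[OF _ _ Q, of 1 \<tau> "\<not> \<sigma>" a] n_ge_3 by (simp add: numeral_3_eq_3)
  ultimately have "conjugate (S N2' \<otimes> S N2') (conjugate (S (N 3)) ?Z) = conjugate (S (N 3)) ?Z"
    by (intro square_fix_transfer[OF adjacent_2'_3]) simp_all
  then show ?thesis
    using Y_conj_2'_3[of \<sigma> "\<not> \<tau>" a] Y_lower[of 3 1 \<sigma> "\<not> \<tau>" a] by (simp add: conjugate_conjugate[symmetric])
qed

lemma equivariant_step_top_2':
  assumes K: "2 \<le> K" "Suc K \<le> n" and Q: "equivariant_upto K"
  shows "conjugate (S N2') (Y (Suc K) K \<sigma> \<tau> a) = Y_at (refl_root N2' (Suc K, K, \<sigma>, \<tau>)) a"
proof -
  have fix_top: "refl_root N2' (Suc K, K, \<sigma>, \<tau>) = (Suc K, K, \<sigma>, \<tau>)" if "3 \<le> K"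
    using that by (simp add: refl_root_fix_top refl_coord_2'_above)
  consider "K = 2" | "K = 3" | "4 \<le> K" using K by linarith
  then show ?thesis
  proof cases
    case 1
    then show ?thesis
      using equivariant_step_top_2'_3[of \<sigma> \<tau> a] Q K refl_root_2'_32[of \<sigma> \<tau>] by (simp add: numeral_3_eq_3)
  next
    case 2
    have "refl_root N2' (Suc K, K - 1, \<sigma>, \<sigma>) = (Suc K, 1, \<sigma>, \<not> \<sigma>)"
      using 2 by (auto simp: refl_root_eq refl_coord_def)
    then show ?thesis
      using equivariant_step_top_adjacent[OF K Q, of N2'] fix_top 2 K adjacent_2'_3
        S_2'_N_commute[of "Suc K"] X_N_conj_2'[of "Suc K" a] by auto
  next
    case 3
    have "refl_root N2' (K, K - 1, \<sigma>, \<sigma>) = (K, K - 1, \<sigma>, \<sigma>)"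
      using 3 by (auto simp: refl_root_eq refl_coord_def)
    then show ?thesis
      using equivariant_step_top_commuting[OF K Q] fix_top 3 K
        S_2'_N_commute[of K] S_2'_N_commute[of "Suc K"] X_N_conj_2'[of "Suc K" a] by simp
  qed
qed

lemma equivariant_upto_Suc:
  assumes Q: "equivariant_upto K" and K: "2 \<le> K" "Suc K \<le> n"
  shows "equivariant_upto (Suc K)"
  unfolding equivariant_upto_def
proof (intro allI impI)
  fix j i \<sigma> \<tau> m a
  assume h: "1 \<le> i" "i < j" "j \<le> Suc K" "valid n m" "fst (refl_root m (j, i, \<sigma>, \<tau>)) \<le> Suc K"
  show "conjugate (S m) (Y j i \<sigma> \<tau> a) = Y_at (refl_root m (j, i, \<sigma>, \<tau>)) a"
  proof (cases "j = Suc K")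
    case j: True
    show ?thesis
    proof (cases "i < K")
      case True
      then show ?thesis using equivariant_step_lower[OF K Q h(4) h(1)] h j by simp
    next
      case False
      then have i: "i = K" using h j by simp
      show ?thesis
      proof (cases m)
        case (N k)
        then show ?thesis
          using h i j equivariant_step_top_N[OF K Q, of k \<sigma> \<tau> a] by (simp add: valid_def)
      next
        case N2'
        then show ?thesis using i j equivariant_step_top_2'[OF K Q, of \<sigma> \<tau> a] by simp
      qed
    qed
  next
    case False
    with refl_root_fst_cases[OF h(2) _ h(5)] h K
    consider "fst (refl_root m (j, i, \<sigma>, \<tau>)) < Suc K" | "m = N (Suc K)" "j = K" by auto
    then show ?thesis
    proof cases
      case 1
      then show ?thesis using Q h False unfolding equivariant_upto_def by simp
    next
      case 2
      then show ?thesis using refl_root_up[of i K \<sigma> \<tau>] Y_lower[of "Suc K" i] K h by simp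
    qed
  qed
qed

lemma equivariant_upto_n: "equivariant_upto n"
proof -
  have "equivariant_upto J" if "2 \<le> J" "J \<le> n" for J
    using that
  proof (induction J rule: nat_induct_at_least)
    case base
    then show ?case using equivariant_upto_2 by simp
  next
    case (Suc K)
    then show ?case using equivariant_upto_Suc by simp
  qed
  then show ?thesis using two_le_n by simp
qed

fun word_image :: "node word \<Rightarrow> 'g" where
  "word_image [] = \<one>"
| "word_image ((b, k) # w) = (if b then S k else inv (S k)) \<otimes> word_image w"

lemma word_image_closed [simp]: "word_image w \<in> carrier G"
  by (induction w rule: word_image.induct) auto

lemma word_image_append: "word_image (u @ w) = word_image u \<otimes> word_image w"
  by (induction u rule: word_image.induct) (auto simp: m_assoc)

lemma Y_at_conj_S: "\<lbrakk>is_root n t; valid n m\<rbrakk> \<Longrightarrow> conjugate (S m) (Y_at t a) = Y_at (refl_root m t) a"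
  using equivariant_upto_n is_root_refl_root[of n t m] two_le_n
  unfolding equivariant_upto_def is_root_def by (auto split: prod.splits)

lemma Y_at_conj_inv_S:
  assumes "is_root n t" "valid n m"
  shows "conjugate (inv (S m)) (Y_at t a) = Y_at (refl_root m t) a"
proof -
  have "conjugate (S m) (Y_at (refl_root m t) a) = Y_at t a"
    using Y_at_conj_S[OF is_root_refl_root[OF assms two_le_n] assms(2)]
      refl_root_involution[OF assms two_le_n] by simp
  then show ?thesis by (metis conjugate_inv_conjugate Y_at_closed gen_closed)
qed

lemma Y_at_conj_word_image:
  "\<lbrakk>Br_word n w; is_root n t\<rbrakk> \<Longrightarrow> conjugate (word_image w) (Y_at t a) = Y_at (refl_root_word w t) a"
proof (induction w)
  case Nil
  then show ?case by simp
next
  case (Cons x w)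
  obtain b k where x: "x = (b, k)" by (cases x)
  have "Br_word n w" "valid n k" using Cons.prems x by (auto simp: Br_word_def)
  moreover have "is_root n (refl_root_word w t)"
    by (rule is_root_refl_root_word[OF calculation(1) Cons.prems(2) two_le_n])
  ultimately show ?case
    using x Cons Y_at_conj_S Y_at_conj_inv_S by (simp add: conjugate_conjugate[symmetric])
qed

definition simple_root :: "node \<Rightarrow> signed_root" where
  "simple_root k = (case k of N j \<Rightarrow> (j, j - 1, True, False) | N2' \<Rightarrow> (2, 1, True, True))"

lemma simple_root: "valid n k \<Longrightarrow> is_root n (simple_root k) \<and> Y_at (simple_root k) a = X k a"
  using n_ge_3 Y_simple Y_2_1 by (cases k) (auto simp: simple_root_def is_root_def valid_def)

lemma X_commute_pure:
  assumes "in_PBr n \<omega>" "valid n k"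
  shows "X k a \<otimes> word_image \<omega> = word_image \<omega> \<otimes> X k a"
proof -
  have "conjugate (word_image \<omega>) (X k a) = X k a"
    using Y_at_conj_word_image[of \<omega> "simple_root k" a] refl_root_word_pure[OF assms(1) _ two_le_n]
      simple_root[OF assms(2), of a] assms(1) by (simp add: in_PBr_def)
  then show ?thesis by (simp add: conjugate_fixed_iff)
qed

text \<open>Writing \<open>y\<^sub>k\<^sup>a = X\<^sub>k\<^sup>a s\<^sub>k\<close>, the pure braid \<open>s\<^sub>k \<omega> s\<^sub>k\<^sup>-\<^sup>1\<close> commutes with \<open>X\<^sub>k\<^sup>a\<close>.\<close>

lemma gen_commute_pure:
  assumes "in_PBr n \<omega>" "valid n k"
  shows "gen k a \<otimes> word_image \<omega> = word_image ((True, k) # \<omega> @ [(False, k)]) \<otimes> gen k a"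
proof -
  let ?E = "word_image ((True, k) # \<omega> @ [(False, k)])"
  have E: "?E = S k \<otimes> word_image \<omega> \<otimes> inv (S k)"
    by (simp add: word_image_append m_assoc)
  have c: "X k a \<otimes> ?E = ?E \<otimes> X k a"
    by (rule X_commute_pure[OF in_PBr_conj[OF assms two_le_n] assms(2)])
  have y: "gen k a = X k a \<otimes> S k"
    by (simp add: X_def m_assoc)
  have "gen k a \<otimes> word_image \<omega> = X k a \<otimes> ?E \<otimes> S k"
    unfolding y E by (simp add: m_assoc)
  also have "\<dots> = ?E \<otimes> X k a \<otimes> S k"
    by (simp only: c)
  also have "\<dots> = ?E \<otimes> gen k a"
    unfolding y by (simp add: m_assoc)
  finally show ?thesis .
qed

end

section \<open>The group presented by generators and relations\<close>

lemma pres_eq_context: "pres_eq R u v \<Longrightarrow> pres_eq R (p @ u @ q) (p @ v @ q)"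
proof (induction rule: pres_eq.induct)
  case (refl u)
  show ?case by (rule pres_eq.refl)
next
  case (sym u v)
  show ?case using sym.IH by (rule pres_eq.sym)
next
  case (trans u v w)
  show ?case using trans.IH by (rule pres_eq.trans)
next
  case (cancel u b x v)
  show ?case using pres_eq.cancel[of R "p @ u" b x "v @ q"] by simp
next
  case (rel l r u v)
  show ?case using pres_eq.rel[OF rel, of "p @ u" "v @ q"] by simp
qed

lemma pres_eq_append: "pres_eq R u u' \<Longrightarrow> pres_eq R v v' \<Longrightarrow> pres_eq R (u @ v) (u' @ v')"
  using pres_eq_context[of R u u' "[]" v] pres_eq_context[of R v v' u' "[]"]
  by (auto intro: pres_eq.trans)

lemma pres_eq_winv_append: "pres_eq R (winv u @ u) []"
proof (induction u)
  case Nil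
  show ?case by (simp add: winv_def pres_eq.refl)
next
  case (Cons x u)
  obtain b z where x: "x = (b, z)" by (cases x)
  have "pres_eq R (winv u @ [(\<not> b, z), (\<not> \<not> b, z)] @ u) (winv u @ u)"
    by (rule pres_eq.cancel)
  then have "pres_eq R (winv (x # u) @ x # u) (winv u @ u)"
    by (simp add: x winv_def)
  then show ?case using Cons.IH by (rule pres_eq.trans)
qed

definition pres_class :: "('g word \<times> 'g word) set \<Rightarrow> 'g word \<Rightarrow> 'g word set" where
  "pres_class R w = {v. pres_eq R w v}"

definition pres_group :: "('g word \<times> 'g word) set \<Rightarrow> 'g word set monoid" where
  "pres_group R = \<lparr>carrier = range (pres_class R),
     mult = (\<lambda>A B. {w. \<exists>u\<in>A. \<exists>v\<in>B. pres_eq R (u @ v) w}), one = pres_class R []\<rparr>"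

lemma pres_class_eq_iff: "pres_class R u = pres_class R v \<longleftrightarrow> pres_eq R u v"
  unfolding pres_class_def by (auto intro: pres_eq.trans pres_eq.sym pres_eq.refl)

lemma pres_class_rel: "(l, r) \<in> R \<Longrightarrow> pres_class R l = pres_class R r"
  using pres_eq.rel[of l r R "[]" "[]"] by (simp add: pres_class_eq_iff)

lemma pres_group_mult: "pres_class R u \<otimes>\<^bsub>pres_group R\<^esub> pres_class R v = pres_class R (u @ v)"
  unfolding pres_group_def pres_class_def
  by (auto intro: pres_eq.trans pres_eq_append pres_eq.sym pres_eq.refl)

lemma pres_group_one: "\<one>\<^bsub>pres_group R\<^esub> = pres_class R []"
  by (simp add: pres_group_def)

lemma pres_group_carrier: "carrier (pres_group R) = range (pres_class R)"
  by (simp add: pres_group_def)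

lemma group_pres_group: "group (pres_group R)"
proof (rule groupI)
  fix x assume "x \<in> carrier (pres_group R)"
  then obtain u where u: "x = pres_class R u" by (auto simp: pres_group_carrier)
  have "pres_class R (winv u) \<otimes>\<^bsub>pres_group R\<^esub> x = \<one>\<^bsub>pres_group R\<^esub>"
    using pres_eq_winv_append[of R u] by (simp add: u pres_group_mult pres_group_one pres_class_eq_iff)
  then show "\<exists>y\<in>carrier (pres_group R). y \<otimes>\<^bsub>pres_group R\<^esub> x = \<one>\<^bsub>pres_group R\<^esub>"
    by (auto simp: pres_group_carrier)
qed (auto simp: pres_group_carrier pres_group_mult pres_group_one)

lemma pres_group_inv: "inv\<^bsub>pres_group R\<^esub> (pres_class R u) = pres_class R (winv u)"
proof -
  interpret group "pres_group R" by (rule group_pres_group)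
  have "pres_class R (winv u) \<otimes>\<^bsub>pres_group R\<^esub> pres_class R u = \<one>\<^bsub>pres_group R\<^esub>"
    using pres_eq_winv_append[of R u] by (simp add: pres_group_mult pres_group_one pres_class_eq_iff)
  then show ?thesis by (intro inv_equality) (auto simp: pres_group_carrier)
qed

abbreviation BrA_group :: "nat \<Rightarrow> (node \<times> 'a::comm_ring_1) word set monoid" where
  "BrA_group n \<equiv> pres_group (BrA_rels n)"

abbreviation BrA_gen :: "nat \<Rightarrow> node \<Rightarrow> 'a::comm_ring_1 \<Rightarrow> (node \<times> 'a) word set" where
  "BrA_gen n k a \<equiv> pres_class (BrA_rels n) (y k a)"

lemma brA_relations_BrA_group:
  assumes "3 \<le> n"
  shows "brA_relations (BrA_group n) n (BrA_gen n :: node \<Rightarrow> 'a::comm_ring_1 \<Rightarrow> _)"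
proof -
  interpret group "BrA_group n :: (node \<times> 'a) word set monoid" by (rule group_pres_group)
  show ?thesis
  proof (unfold_locales)
    fix k and a b :: 'a
    assume "valid n k"
    then have "(y k a @ y k 0 @ y k b, y k 0 @ y k 0 @ y k (a + b)) \<in> BrA_rels n"
      unfolding BrA_rels_def by blast
    then show "BrA_gen n k a \<otimes>\<^bsub>BrA_group n\<^esub> BrA_gen n k 0 \<otimes>\<^bsub>BrA_group n\<^esub> BrA_gen n k b
      = BrA_gen n k 0 \<otimes>\<^bsub>BrA_group n\<^esub> BrA_gen n k 0 \<otimes>\<^bsub>BrA_group n\<^esub> BrA_gen n k (a + b)"
      by (simp add: pres_group_mult pres_class_rel)
  next
    fix k l and a b :: 'a
    assume "valid n k" "valid n l" "k \<noteq> l" "\<not> adjacent n k l"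
    then have "(y k a @ y l b, y l b @ y k a) \<in> BrA_rels n"
      unfolding BrA_rels_def by blast
    then show "BrA_gen n k a \<otimes>\<^bsub>BrA_group n\<^esub> BrA_gen n l b = BrA_gen n l b \<otimes>\<^bsub>BrA_group n\<^esub> BrA_gen n k a"
      by (simp add: pres_group_mult pres_class_rel)
  next
    fix k l and a b c :: 'a
    assume "adj_lt n k l"
    then have "(y k a @ y l b @ y k c, y l c @ y k (b + a * c) @ y l a) \<in> BrA_rels n"
      unfolding BrA_rels_def by blast
    then show "BrA_gen n k a \<otimes>\<^bsub>BrA_group n\<^esub> BrA_gen n l b \<otimes>\<^bsub>BrA_group n\<^esub> BrA_gen n k c
      = BrA_gen n l c \<otimes>\<^bsub>BrA_group n\<^esub> BrA_gen n k (b + a * c) \<otimes>\<^bsub>BrA_group n\<^esub> BrA_gen n l a"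
      by (simp add: pres_group_mult pres_class_rel)
  qed (auto simp: pres_group_carrier assms)
qed

lemma word_image_BrA_group:
  assumes "3 \<le> n"
  shows "brA_relations.word_image (BrA_group n) (BrA_gen n) w
    = pres_class (BrA_rels n) (emb w :: (node \<times> 'a::comm_ring_1) word)"
proof -
  interpret B: brA_relations "BrA_group n" n "BrA_gen n :: node \<Rightarrow> 'a \<Rightarrow> _"
    by (rule brA_relations_BrA_group[OF assms])
  show ?thesis
  proof (induction w)
    case Nil
    show ?case by (simp add: pres_group_one emb_def)
  next
    case (Cons x w)
    obtain b k where x: "x = (b, k)" by (cases x)
    have "B.word_image (x # w)
      = pres_class (BrA_rels n) (if b then y k 0 else winv (y k (0 :: 'a))) \<otimes>\<^bsub>BrA_group n\<^esub> B.word_image w"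
      by (simp add: x pres_group_inv)
    then show ?case
      using Cons.IH by (simp add: x pres_group_mult emb_def y_def winv_def)
  qed
qed

lemma X_BrA_group:
  assumes "3 \<le> n"
  shows "brA_relations.X (BrA_group n) (BrA_gen n) k a
    = pres_class (BrA_rels n) (y k a @ winv (y k (0 :: 'a::comm_ring_1)))"
proof -
  interpret B: brA_relations "BrA_group n" n "BrA_gen n :: node \<Rightarrow> 'a \<Rightarrow> _"
    by (rule brA_relations_BrA_group[OF assms])
  show ?thesis by (simp add: B.X_def pres_group_inv pres_group_mult)
qed

theorem lemma3p9:
  fixes n :: nat and k :: node and \<omega> :: "node word"
  assumes "3 \<le> n" and "valid n k" and "in_PBr n \<omega>"
  shows "(\<exists>\<omega>'. Br_word n \<omega>' \<and>
            (\<forall>a :: 'a :: comm_ring_1. BrA_eq n (y k a @ emb \<omega>) (emb \<omega>' @ y k a)))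
       \<and> (\<forall>a :: 'a. BrA_eq n (y k a @ winv (y k 0) @ emb \<omega>)
                               (emb \<omega> @ y k a @ winv (y k 0)))"
proof -
  interpret B: brA_relations "BrA_group n" n "BrA_gen n :: node \<Rightarrow> 'a \<Rightarrow> _"
    by (rule brA_relations_BrA_group[OF assms(1)])
  let ?\<omega>' = "(True, k) # \<omega> @ [(False, k)]"
  have "Br_word n ?\<omega>'"
    using assms(2,3) by (auto simp: in_PBr_def Br_word_def)
  moreover have "BrA_eq n (y k a @ emb \<omega>) (emb ?\<omega>' @ y k a)" for a :: 'a
    using B.gen_commute_pure[OF assms(3,2), of a]
    by (simp add: word_image_BrA_group[OF assms(1)] pres_group_mult pres_class_eq_iff BrA_eq_def)
  moreover have "BrA_eq n (y k a @ winv (y k 0) @ emb \<omega>) (emb \<omega> @ y k a @ winv (y k 0))" for a :: 'a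
    using B.X_commute_pure[OF assms(3,2), of a]
    by (simp add: word_image_BrA_group[OF assms(1)] X_BrA_group[OF assms(1)]
        pres_group_mult pres_class_eq_iff BrA_eq_def)
  ultimately show ?thesis by blast
qed

end
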